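(* Let $(\Gamma,\boldsymbol{\ell})$ be a metric graph. If there exists one non-zero eigenvalue of $(\Gamma,\boldsymbol{\ell})$ which is simple and whose eigenfunction has full support, then there are infinitely many simple eigenvalues of $(\Gamma,\boldsymbol{\ell})$ whose eigenfunctions have full support.
   Context: $\Gamma$ is a finite graph with edges $e_1,\dots,e_N$; $(\Gamma,\boldsymbol{\ell})$, $\boldsymbol{\ell}\in\mathbb{R}_+^N$, identifies $e_j$ with $[0,\ell_j]$ and carries the Laplacian $f\mapsto -f''$ edgewise with standard (Kirchhoff) vertex conditions: continuity at each vertex and vanishing sum of outgoing derivatives at each vertex. An eigenvalue is simple if its eigenspace is one-dimensional. An eigenfunction $f$ has full support if $f|_{e_j}\not\equiv0$ for every $j=1,\dots,N$. *)

theory Defs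
  imports "HOL-Analysis.Analysis"
begin

text \<open>A finite (multi)graph with edges indexed by 0..<N; edge j goes from vertex
  src j (identified with the point 0 of [0, l j]) to vertex tgt j (identified with
  the point l j).  A function on the metric graph is a family f of functions,
  f j being the restriction to edge j, considered on {0..l j}.\<close>

definition kirchhoff_eigenfunction ::
  "nat \<Rightarrow> (nat \<Rightarrow> 'v) \<Rightarrow> (nat \<Rightarrow> 'v) \<Rightarrow> (nat \<Rightarrow> real) \<Rightarrow> real \<Rightarrow> (nat \<Rightarrow> real \<Rightarrow> real) \<Rightarrow> bool"
where
  "kirchhoff_eigenfunction N src tgt l lam f \<longleftrightarrow>
     (\<exists>f' f''.
        (\<forall>j<N. \<forall>x\<in>{0..l j}.
            (f j has_real_derivative f' j x) (at x within {0..l j}) \<and>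
            (f' j has_real_derivative f'' j x) (at x within {0..l j}) \<and>
            - f'' j x = lam * f j x) \<and>
        \<comment> \<open>continuity at every vertex\<close>
        (\<forall>j<N. \<forall>k<N.
            (src j = src k \<longrightarrow> f j 0 = f k 0) \<and>
            (src j = tgt k \<longrightarrow> f j 0 = f k (l k)) \<and>
            (tgt j = tgt k \<longrightarrow> f j (l j) = f k (l k))) \<and>
        \<comment> \<open>sum of outgoing derivatives vanishes at every vertex\<close>
        (\<forall>v. (\<Sum>j\<in>{j. j < N \<and> src j = v}. f' j 0)
              + (\<Sum>j\<in>{j. j < N \<and> tgt j = v}. - f' j (l j)) = 0))"

definition graph_fun_nonzero :: "nat \<Rightarrow> (nat \<Rightarrow> real) \<Rightarrow> (nat \<Rightarrow> real \<Rightarrow> real) \<Rightarrow> bool" where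
  "graph_fun_nonzero N l f \<longleftrightarrow> (\<exists>j<N. \<exists>x\<in>{0..l j}. f j x \<noteq> 0)"

definition full_support :: "nat \<Rightarrow> (nat \<Rightarrow> real) \<Rightarrow> (nat \<Rightarrow> real \<Rightarrow> real) \<Rightarrow> bool" where
  "full_support N l f \<longleftrightarrow> (\<forall>j<N. \<exists>x\<in>{0..l j}. f j x \<noteq> 0)"

definition is_eigenvalue where
  "is_eigenvalue N src tgt l lam \<longleftrightarrow>
     (\<exists>f. kirchhoff_eigenfunction N src tgt l lam f \<and> graph_fun_nonzero N l f)"

definition simple_eigenvalue where
  "simple_eigenvalue N src tgt l lam \<longleftrightarrow>
     (\<exists>\<phi>. kirchhoff_eigenfunction N src tgt l lam \<phi> \<and> graph_fun_nonzero N l \<phi> \<and>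
        (\<forall>g. kirchhoff_eigenfunction N src tgt l lam g \<longrightarrow>
           (\<exists>c. \<forall>j<N. \<forall>x\<in>{0..l j}. g j x = c * \<phi> j x)))"

end

theory Submission
  imports Defs "Jordan_Normal_Form.Determinant" "HOL-Analysis.Kronecker_Approximation_Theorem"
begin

(* Eigenvalues are nonnegative (energy argument), so the given eigenvalue is k\<^sup>2 with k > 0. On
   edge j an eigenfunction for s\<^sup>2 is x j cos (s t) + x (N + j) sin (s t), and the vertex conditions
   become a linear system M (s l) x = 0 whose matrix depends on the phases s l j only modulo 2 pi.
   At the simple eigenvalue, with kernel vector v, the left null vector given by Green's identity
   pairs with the derivative of M (s l) v to - \<Sum>j. l j (v j\<^sup>2 + v (N + j)\<^sup>2) < 0, so det M (s l)
   changes sign at s = k, and the matrix bordered by this derivative column is invertible.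
   Dirichlet's simultaneous approximation gives arbitrarily large integers q with q l j almost
   integral; by continuity det M (s l) still changes sign near s = k + 2 pi q, hence vanishes at some
   s there, with s l close to k l modulo 2 pi. Invertibility of the bordered matrix persists
   nearby, so the kernel of M (s l) is spanned by a vector close to v: s\<^sup>2 is again a simple
   eigenvalue with an eigenfunction of full support. *)


section \<open>Square matrices given by their entries\<close>

definition detf :: "nat \<Rightarrow> (nat \<Rightarrow> nat \<Rightarrow> real) \<Rightarrow> real" where
  "detf n A = det (mat n n (\<lambda>(i, j). A i j))"

definition mulvf :: "nat \<Rightarrow> (nat \<Rightarrow> nat \<Rightarrow> real) \<Rightarrow> (nat \<Rightarrow> real) \<Rightarrow> nat \<Rightarrow> real" where
  "mulvf n A x i = (\<Sum>j<n. A i j * x j)"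

definition replace_colf :: "(nat \<Rightarrow> nat \<Rightarrow> real) \<Rightarrow> nat \<Rightarrow> (nat \<Rightarrow> real) \<Rightarrow> nat \<Rightarrow> nat \<Rightarrow> real" where
  "replace_colf A p c i j = (if j = p then c i else A i j)"

lemma replace_colf_same [simp]: "replace_colf A p c i p = c i"
  by (simp add: replace_colf_def)

lemma mulvf_scale: "mulvf n A (\<lambda>j. c * x j) i = c * mulvf n A x i"
  by (simp add: mulvf_def sum_distrib_left algebra_simps)

lemma mulvf_diff: "mulvf n A (\<lambda>j. x j - y j) i = mulvf n A x i - mulvf n A y i"
  by (simp add: mulvf_def right_diff_distrib sum_subtractf)

lemma mulvf_upd_zero: "p < n \<Longrightarrow> mulvf n A (x(p := 0)) i = mulvf n A x i - A i p * x p"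
  by (simp add: mulvf_def sum.remove[of "{..<n}" p] lessThan_iff)

lemma mulvf_replace_colf:
  "p < n \<Longrightarrow> mulvf n (replace_colf A p c) x i = mulvf n A x i + (c i - A i p) * x p"
  by (simp add: mulvf_def replace_colf_def sum.remove[of "{..<n}" p] algebra_simps)

lemma sum_delta_mult:
  fixes y :: "nat \<Rightarrow> real"
  assumes "a < m"
  shows "(\<Sum>i<m. (if a = i then 1 else 0) * y i) = y a"
    and "(\<Sum>i<m. c * (if a = i then 1 else 0) * y i) = c * y a"
  using assms
  by (simp_all add: if_distrib[of "\<lambda>z. z * _"] if_distrib[of "\<lambda>z. _ * z"] sum.delta' cong: if_cong)

lemma index_mult_mat_vec_mat:
  "i < n \<Longrightarrow> vec_index (mat n n (\<lambda>(i, j). A i j) *\<^sub>v Matrix.vec n x) i = mulvf n A x i"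
  by (simp add: mulvf_def scalar_prod_def atLeast0LessThan)

lemma detf_eq_0_iff: "detf n A = 0 \<longleftrightarrow> (\<exists>u. (\<exists>i<n. u i \<noteq> 0) \<and> (\<forall>i<n. mulvf n A u i = 0))"
proof -
  let ?A = "mat n n (\<lambda>(i, j). A i j) :: real mat"
  have "(\<exists>v. v \<in> carrier_vec n \<and> v \<noteq> 0\<^sub>v n \<and> ?A *\<^sub>v v = 0\<^sub>v n) \<longleftrightarrow>
        (\<exists>u. (\<exists>i<n. u i \<noteq> 0) \<and> (\<forall>i<n. mulvf n A u i = 0))"
  proof
    assume "\<exists>v. v \<in> carrier_vec n \<and> v \<noteq> 0\<^sub>v n \<and> ?A *\<^sub>v v = 0\<^sub>v n"
    then obtain v where v: "v \<in> carrier_vec n" "v \<noteq> 0\<^sub>v n" "?A *\<^sub>v v = 0\<^sub>v n" by blast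
    have "v = Matrix.vec n (vec_index v)" using v(1) by auto
    then have "\<forall>i<n. mulvf n A (vec_index v) i = 0"
      using v(3) index_mult_mat_vec_mat by (metis index_zero_vec(1))
    moreover have "\<exists>i<n. vec_index v i \<noteq> 0" using v(1,2) by (metis eq_vecI carrier_vecD index_zero_vec)
    ultimately show "\<exists>u. (\<exists>i<n. u i \<noteq> 0) \<and> (\<forall>i<n. mulvf n A u i = 0)" by blast
  next
    assume "\<exists>u. (\<exists>i<n. u i \<noteq> 0) \<and> (\<forall>i<n. mulvf n A u i = 0)"
    then obtain u where u: "\<exists>i<n. u i \<noteq> 0" "\<forall>i<n. mulvf n A u i = 0" by blast
    have "Matrix.vec n u \<noteq> 0\<^sub>v n" using u(1) by (metis index_vec index_zero_vec(1))
    moreover have "?A *\<^sub>v Matrix.vec n u = 0\<^sub>v n"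
      using u(2) by (intro eq_vecI) (auto simp: index_mult_mat_vec_mat[symmetric])
    ultimately show "\<exists>v. v \<in> carrier_vec n \<and> v \<noteq> 0\<^sub>v n \<and> ?A *\<^sub>v v = 0\<^sub>v n"
      by (intro exI[of _ "Matrix.vec n u"]) auto
  qed
  then show ?thesis unfolding detf_def by (simp add: det_0_iff_vec_prod_zero_field[of _ n])
qed

lemma cramer_lemma_detf:
  assumes "p < n" and "\<And>i. i < n \<Longrightarrow> c i = mulvf n A x i"
  shows "detf n (replace_colf A p c) = x p * detf n A"
proof -
  let ?A = "mat n n (\<lambda>(i, j). A i j) :: real mat"
  have "replace_col ?A (?A *\<^sub>v Matrix.vec n x) p = mat n n (\<lambda>(i, j). replace_colf A p c i j)"
    by (rule eq_matI) (auto simp: replace_col_def replace_colf_def index_mult_mat_vec_mat[symmetric] assms(2))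
  then show ?thesis
    using cramer_lemma_mat[of ?A n "Matrix.vec n x" p] assms(1) by (simp add: detf_def)
qed

lemma tendsto_detf:
  assumes "\<And>i j. i < n \<Longrightarrow> j < n \<Longrightarrow> ((\<lambda>y. A y i j) \<longlongrightarrow> B i j) F"
  shows "((\<lambda>y. detf n (A y)) \<longlongrightarrow> detf n B) F"
proof -
  have "detf n C = (\<Sum>\<pi> | \<pi> permutes {0..<n}. signof \<pi> * (\<Prod>i = 0..<n. C i (\<pi> i)))" for C
    unfolding detf_def by (subst det_def'[of _ n]) (auto intro!: sum.cong prod.cong simp: permutes_in_image)
  then show ?thesis
    by (simp only:) (intro tendsto_intros assms; auto simp: permutes_in_image)
qed


section \<open>Bordered determinants\<close>

lemma detf_replace_colf_neq_0:
  assumes p: "p < n" and vp: "v p \<noteq> 0"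
    and kernel: "\<And>y. \<forall>i<n. mulvf n A y i = 0 \<Longrightarrow> \<exists>c. \<forall>i<n. y i = c * v i"
    and not_range: "\<And>y. \<exists>i<n. mulvf n A y i \<noteq> r i"
  shows "detf n (replace_colf A p r) \<noteq> 0"
proof
  assume "detf n (replace_colf A p r) = 0"
  then obtain u where u: "\<exists>i<n. u i \<noteq> 0" and "\<forall>i<n. mulvf n (replace_colf A p r) u i = 0"
    by (auto simp: detf_eq_0_iff)
  then have Au: "\<forall>i<n. mulvf n A (u(p := 0)) i = - r i * u p"
    using p by (simp add: mulvf_replace_colf mulvf_upd_zero algebra_simps eq_neg_iff_add_eq_0)
  show False
  proof (cases "u p = 0")
    case True
    then have "u(p := 0) = u" by auto
    then have "\<forall>i<n. mulvf n A u i = 0" using Au True by simp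
    then obtain c where c: "\<forall>i<n. u i = c * v i" using kernel by blast
    with True p vp have "c = 0" by auto
    with c u show False by auto
  next
    case False
    have "mulvf n A (\<lambda>j. - 1 / u p * (u(p := 0)) j) i = r i" if "i < n" for i
      unfolding mulvf_scale using Au that False by (simp del: fun_upd_apply)
    with not_range show False by blast
  qed
qed

lemma detf_sign_change:
  fixes A :: "real \<Rightarrow> nat \<Rightarrow> nat \<Rightarrow> real"
  assumes p: "p < n" and vp: "v p \<noteq> 0"
    and cont: "\<And>i j. i < n \<Longrightarrow> j < n \<Longrightarrow> ((\<lambda>t. A t i j) \<longlongrightarrow> A a i j) (at a)"
    and kernel: "\<And>i. i < n \<Longrightarrow> mulvf n (A a) v i = 0"
    and deriv: "\<And>i. i < n \<Longrightarrow> ((\<lambda>t. mulvf n (A t) v i) has_real_derivative r i) (at a)"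
    and bordered: "detf n (replace_colf (A a) p r) \<noteq> 0"
  shows "\<forall>\<^sub>F \<delta> in at_right 0. detf n (A (a + \<delta>)) * detf n (A (a - \<delta>)) < 0"
proof -
  define L where "L = detf n (replace_colf (A a) p r)"
  define h where "h t = detf n (replace_colf (A t) p (\<lambda>i. mulvf n (A t) v i / (t - a)))" for t
  have h_eq: "h t = v p / (t - a) * detf n (A t)" for t
    unfolding h_def by (rule cramer_lemma_detf[OF p]) (simp add: mulvf_def sum_divide_distrib)
  have "(h \<longlongrightarrow> L) (at a)"
    unfolding h_def L_def
  proof (rule tendsto_detf)
    fix i j assume ij: "i < n" "j < n"
    have "((\<lambda>t. mulvf n (A t) v i / (t - a)) \<longlongrightarrow> r i) (at a)"
      using deriv[OF ij(1)] kernel[OF ij(1)] by (simp add: has_field_derivative_iff)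
    then show "((\<lambda>t. replace_colf (A t) p (\<lambda>i. mulvf n (A t) v i / (t - a)) i j) \<longlongrightarrow>
        replace_colf (A a) p r i j) (at a)"
      using cont[OF ij] by (simp add: replace_colf_def)
  qed
  then have "((\<lambda>t. h t * L) \<longlongrightarrow> L * L) (at a)" by (intro tendsto_intros)
  moreover have "L * L > 0" using bordered unfolding L_def by (metis not_real_square_gt_zero)
  ultimately have "\<forall>\<^sub>F t in at a. h t * L > 0" by (rule order_tendstoD)
  then obtain d where d: "d > 0" "\<And>t. t \<noteq> a \<Longrightarrow> \<bar>t - a\<bar> < d \<Longrightarrow> h t * L > 0"
    unfolding eventually_at by (auto simp: dist_real_def)
  show ?thesis
    unfolding eventually_at_right_field
  proof (intro exI[of _ d] conjI allI impI)
    fix \<delta> :: real assume \<delta>: "0 < \<delta>" "\<delta> < d"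
    have "0 < (h (a + \<delta>) * L) * (h (a - \<delta>) * L)" using d(2)[of "a + \<delta>"] d(2)[of "a - \<delta>"] \<delta> by simp
    also have "\<dots> = (v p / \<delta>)\<^sup>2 * L\<^sup>2 * - (detf n (A (a + \<delta>)) * detf n (A (a - \<delta>)))"
      by (simp add: h_eq power2_eq_square algebra_simps)
    finally have neg: "0 < (v p / \<delta>)\<^sup>2 * L\<^sup>2 * - (detf n (A (a + \<delta>)) * detf n (A (a - \<delta>)))" .
    have "0 < (v p / \<delta>)\<^sup>2" using \<delta> vp by simp
    moreover have "0 < L\<^sup>2" using \<open>L * L > 0\<close> by (simp add: power2_eq_square)
    ultimately have "0 < (v p / \<delta>)\<^sup>2 * L\<^sup>2" by simp
    then have "0 < - (detf n (A (a + \<delta>)) * detf n (A (a - \<delta>)))" by (rule zero_less_mult_pos[OF neg])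
    then show "detf n (A (a + \<delta>)) * detf n (A (a - \<delta>)) < 0" by simp
  qed (use d in auto)
qed

lemma cramer_kernel_detf:
  assumes "p < n" and "i < n" and "i \<noteq> p" and "\<forall>k<n. mulvf n M x k = 0" and "x p = 1"
  shows "detf n (replace_colf (replace_colf M p r) i (\<lambda>k. - M k p)) = x i * detf n (replace_colf M p r)"
proof -
  have "detf n (replace_colf (replace_colf M p r) i (\<lambda>k. - M k p)) =
      (x(p := 0)) i * detf n (replace_colf M p r)"
    by (rule cramer_lemma_detf)
      (use assms in \<open>simp_all add: mulvf_replace_colf mulvf_upd_zero del: fun_upd_apply\<close>)
  with assms(3) show ?thesis by simp
qed

lemma kernel_of_bordered_detf:
  assumes p: "p < n" and "detf n M = 0" and bordered: "detf n (replace_colf M p r) \<noteq> 0"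
    and minors: "\<And>i. i < n \<Longrightarrow> i \<noteq> p \<Longrightarrow> v i \<noteq> 0 \<Longrightarrow>
      detf n (replace_colf (replace_colf M p r) i (\<lambda>k. - M k p)) \<noteq> 0"
  shows "\<exists>z. (\<forall>i<n. mulvf n M z i = 0) \<and>
    (\<forall>x. (\<forall>i<n. mulvf n M x i = 0) \<longrightarrow> (\<forall>i<n. x i = x p * z i)) \<and>
    (\<forall>i<n. v i \<noteq> 0 \<longrightarrow> z i \<noteq> 0)"
proof -
  have unique: "\<forall>i<n. x i = 0" if "\<forall>k<n. mulvf n M x k = 0" "x p = 0" for x
    using bordered that p by (auto simp: detf_eq_0_iff mulvf_replace_colf)
  obtain u where u: "\<exists>i<n. u i \<noteq> 0" "\<forall>k<n. mulvf n M u k = 0"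
    using \<open>detf n M = 0\<close> by (auto simp: detf_eq_0_iff)
  then have "u p \<noteq> 0" using unique by blast
  define z where "z j = 1 / u p * u j" for j
  have zp: "z p = 1" using \<open>u p \<noteq> 0\<close> by (simp add: z_def)
  have z: "\<forall>k<n. mulvf n M z k = 0" using u unfolding z_def mulvf_scale by simp
  show ?thesis
  proof (intro exI conjI allI impI)
    show "mulvf n M z k = 0" if "k < n" for k using z that by blast
  next
    fix x i assume x: "\<forall>k<n. mulvf n M x k = 0" and "i < n"
    have "\<forall>k<n. mulvf n M (\<lambda>j. x j - x p * z j) k = 0"
      using x z by (simp add: mulvf_diff mulvf_scale)
    then show "x i = x p * z i" using unique[of "\<lambda>j. x j - x p * z j"] zp \<open>i < n\<close> by simp
  next
    fix i assume "i < n" "v i \<noteq> 0"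
    show "z i \<noteq> 0"
    proof (cases "i = p")
      case False
      then show ?thesis
        using cramer_kernel_detf[where r = r, OF p \<open>i < n\<close> False z zp]
          minors[OF \<open>i < n\<close> False \<open>v i \<noteq> 0\<close>]
        by auto
    qed (simp add: zp)
  qed
qed

lemma kernel_perturbation:
  fixes A :: "'a \<Rightarrow> nat \<Rightarrow> nat \<Rightarrow> real"
  assumes p: "p < n" and vp: "v p \<noteq> 0"
    and conv: "\<And>i j. i < n \<Longrightarrow> j < n \<Longrightarrow> ((\<lambda>y. A y i j) \<longlongrightarrow> A0 i j) F"
    and kernel: "\<And>i. i < n \<Longrightarrow> mulvf n A0 v i = 0"
    and bordered: "detf n (replace_colf A0 p r) \<noteq> 0"
  shows "\<forall>\<^sub>F y in F. detf n (A y) = 0 \<longrightarrow>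
    (\<exists>z. (\<forall>i<n. mulvf n (A y) z i = 0) \<and>
         (\<forall>x. (\<forall>i<n. mulvf n (A y) x i = 0) \<longrightarrow> (\<forall>i<n. x i = x p * z i)) \<and>
         (\<forall>i<n. v i \<noteq> 0 \<longrightarrow> z i \<noteq> 0))"
proof -
  let ?B = "\<lambda>M. replace_colf M p r"
  let ?C = "\<lambda>M i. replace_colf (?B M) i (\<lambda>k. - M k p)"
  have ev_B: "\<forall>\<^sub>F y in F. detf n (?B (A y)) \<noteq> 0"
  proof (rule tendsto_imp_eventually_ne[OF tendsto_detf bordered])
    fix k j assume "k < n" "j < n"
    then show "((\<lambda>y. ?B (A y) k j) \<longlongrightarrow> ?B A0 k j) F"
      by (cases "j = p") (simp_all add: replace_colf_def conv)
  qed
  have C_ne: "\<forall>\<^sub>F y in F. detf n (?C (A y) i) \<noteq> 0" if i: "i < n" "i \<noteq> p" "v i \<noteq> 0" for i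
  proof (rule tendsto_imp_eventually_ne[OF tendsto_detf])
    fix k j assume "k < n" "j < n"
    then show "((\<lambda>y. ?C (A y) i k j) \<longlongrightarrow> ?C A0 i k j) F"
      using p by (cases "j = i"; cases "j = p") (simp_all add: replace_colf_def conv tendsto_minus)
  next
    have "\<forall>k<n. mulvf n A0 (\<lambda>j. 1 / v p * v j) k = 0" unfolding mulvf_scale using kernel by simp
    then have "detf n (?C A0 i) = v i / v p * detf n (?B A0)"
      using cramer_kernel_detf[OF p i(1,2)] vp by simp
    then show "detf n (?C A0 i) \<noteq> 0" using i vp bordered by simp
  qed
  have ev_C: "\<forall>\<^sub>F y in F. \<forall>i\<in>{..<n}. i \<noteq> p \<and> v i \<noteq> 0 \<longrightarrow> detf n (?C (A y) i) \<noteq> 0"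
  proof (rule eventually_ball_finite[OF finite_lessThan], rule ballI)
    fix i assume "i \<in> {..<n}"
    show "\<forall>\<^sub>F y in F. i \<noteq> p \<and> v i \<noteq> 0 \<longrightarrow> detf n (?C (A y) i) \<noteq> 0"
    proof (cases "i \<noteq> p \<and> v i \<noteq> 0")
      case True
      with \<open>i \<in> {..<n}\<close> have "\<forall>\<^sub>F y in F. detf n (?C (A y) i) \<noteq> 0" by (intro C_ne) auto
      then show ?thesis by (rule eventually_mono) simp
    qed auto
  qed
  from ev_B ev_C show ?thesis
  proof eventually_elim
    case (elim y)
    show ?case
    proof
      assume "detf n (A y) = 0"
      moreover have "\<And>i. i < n \<Longrightarrow> i \<noteq> p \<Longrightarrow> v i \<noteq> 0 \<Longrightarrow> detf n (?C (A y) i) \<noteq> 0"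
        using elim(2) by blast
      ultimately show "\<exists>z. (\<forall>i<n. mulvf n (A y) z i = 0) \<and>
          (\<forall>x. (\<forall>i<n. mulvf n (A y) x i = 0) \<longrightarrow> (\<forall>i<n. x i = x p * z i)) \<and>
          (\<forall>i<n. v i \<noteq> 0 \<longrightarrow> z i \<noteq> 0)"
        by (rule kernel_of_bordered_detf[OF p _ elim(1)])
    qed
  qed
qed


section \<open>Zeros of a periodic function along a ray\<close>

lemma Dirichlet_approx_simult_sequence:
  fixes \<alpha> :: "nat \<Rightarrow> real"
  obtains Q :: "nat \<Rightarrow> int" and P :: "nat \<Rightarrow> nat \<Rightarrow> int"
  where "\<And>m. Q m \<ge> int m"
    and "\<And>m j. j < N \<Longrightarrow> \<bar>of_int (Q m) * \<alpha> j - of_int (P m j)\<bar> < 1 / (real m + 1)"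
proof -
  have "\<exists>q p. q \<ge> int m \<and> (\<forall>j<N. \<bar>of_int q * \<alpha> j - of_int (p j)\<bar> < 1 / (real m + 1))" for m
  proof -
    obtain q p where q: "0 < q"
      and qp: "\<And>j. j < N \<Longrightarrow> \<bar>of_int q * ((real m + 1) * \<alpha> j) - of_int (p j)\<bar> < 1 / real (Suc m)"
      by (rule Dirichlet_approx_simult[of "Suc m" N "\<lambda>j. (real m + 1) * \<alpha> j"]) (simp, blast)
    have "int m \<le> q * (int m + 1)"
      using q by (simp add: algebra_simps) (smt (verit) mult_le_cancel_right1 of_nat_0_le_iff)
    moreover have "\<forall>j<N. \<bar>of_int (q * (int m + 1)) * \<alpha> j - of_int (p j)\<bar> < 1 / (real m + 1)"
      using qp by (simp add: algebra_simps)
    ultimately show ?thesis by blast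
  qed
  then show thesis using that by metis
qed

lemma IVT_mult_neg:
  fixes f :: "real \<Rightarrow> real"
  assumes "a \<le> b" "continuous_on {a..b} f" "f a * f b < 0"
  shows "\<exists>x. a \<le> x \<and> x \<le> b \<and> f x = 0"
  using IVT'[of f a 0 b] IVT2'[of f b 0 a] assms by (cases "f a < 0") (auto simp: mult_less_0_iff)

lemma shifted_sign_change:
  fixes D :: "(nat \<Rightarrow> real) \<Rightarrow> real" and l :: "nat \<Rightarrow> real"
  assumes cont: "\<And>X \<theta>. (\<And>j. j < N \<Longrightarrow> (\<lambda>m. X m j) \<longlonglongrightarrow> \<theta> j) \<Longrightarrow> (\<lambda>m. D (X m)) \<longlonglongrightarrow> D \<theta>"
    and periodic: "\<And>\<theta> q. D (\<lambda>j. \<theta> j + 2 * pi * of_int (q j)) = D \<theta>"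
    and sign: "D (\<lambda>j. (k + \<delta>) * l j) * D (\<lambda>j. (k - \<delta>) * l j) < 0"
    and \<epsilon>: "\<epsilon> > 0"
  obtains q :: int and p :: "nat \<Rightarrow> int"
  where "T \<le> 2 * pi * q"
    and "\<And>j. j < N \<Longrightarrow> \<bar>2 * pi * (q * l j - p j)\<bar> < \<epsilon>"
    and "D (\<lambda>j. (k + 2 * pi * q + \<delta>) * l j) * D (\<lambda>j. (k + 2 * pi * q - \<delta>) * l j) < 0"
proof -
  obtain Q :: "nat \<Rightarrow> int" and P :: "nat \<Rightarrow> nat \<Rightarrow> int" where Q: "\<And>m. Q m \<ge> int m"
    and QP: "\<And>m j. j < N \<Longrightarrow> \<bar>of_int (Q m) * l j - of_int (P m j)\<bar> < 1 / (real m + 1)"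
    by (rule Dirichlet_approx_simult_sequence[of N l]) blast
  define \<phi> where "\<phi> m j = 2 * pi * (of_int (Q m) * l j - of_int (P m j))" for m j
  have \<phi>_bound: "\<bar>\<phi> m j\<bar> < 2 * pi / (real m + 1)" if "j < N" for m j
  proof -
    have "2 * pi * \<bar>of_int (Q m) * l j - of_int (P m j)\<bar> < 2 * pi * (1 / (real m + 1))"
      by (rule mult_strict_left_mono[OF QP[OF that]]) simp
    then show ?thesis by (simp add: \<phi>_def abs_mult)
  qed
  have bound_lim: "(\<lambda>m. 2 * pi / (real m + 1)) \<longlonglongrightarrow> 0"
    using tendsto_mult_left_zero[OF LIMSEQ_inverse_real_of_nat, of "2 * pi"]
    by (simp add: divide_inverse add.commute)
  have D_shift: "D (\<lambda>j. (k + 2 * pi * of_int (Q m) + t) * l j) = D (\<lambda>j. (k + t) * l j + \<phi> m j)" for t m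
  proof -
    have "(\<lambda>j. (k + 2 * pi * of_int (Q m) + t) * l j) =
        (\<lambda>j. (k + t) * l j + \<phi> m j + 2 * pi * of_int (P m j))"
      by (auto simp: \<phi>_def algebra_simps)
    then show ?thesis by (simp add: periodic)
  qed
  have \<phi>_lim: "(\<lambda>m. \<phi> m j) \<longlonglongrightarrow> 0" if "j < N" for j
    using \<phi>_bound[OF that] by (intro Lim_null_comparison[OF _ bound_lim]) (simp add: less_imp_le)
  have shift_lim: "(\<lambda>m. D (\<lambda>j. (k + t) * l j + \<phi> m j)) \<longlonglongrightarrow> D (\<lambda>j. (k + t) * l j)" for t
    by (rule cont) (auto intro!: tendsto_eq_intros \<phi>_lim)
  have "\<forall>\<^sub>F m in sequentially. D (\<lambda>j. (k + \<delta>) * l j + \<phi> m j) * D (\<lambda>j. (k + - \<delta>) * l j + \<phi> m j) < 0"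
    using sign by (intro order_tendstoD(2)[OF tendsto_mult[OF shift_lim shift_lim]]) simp
  moreover have "\<forall>\<^sub>F m in sequentially. 2 * pi / (real m + 1) < \<epsilon>"
    using \<epsilon> by (intro order_tendstoD(2)[OF bound_lim])
  moreover have "\<forall>\<^sub>F m in sequentially. T \<le> real m"
    by (rule eventually_sequentiallyI[of "nat \<lceil>T\<rceil>"]) linarith
  ultimately obtain m where m: "D (\<lambda>j. (k + \<delta>) * l j + \<phi> m j) * D (\<lambda>j. (k + - \<delta>) * l j + \<phi> m j) < 0"
    "2 * pi / (real m + 1) < \<epsilon>" "T \<le> real m"
    using eventually_happens'[OF sequentially_bot] eventually_conj by (metis (no_types, lifting))
  show thesis
  proof (rule that[of "Q m" "P m"])
    have "real m \<le> of_int (Q m)" using Q by (metis of_int_le_iff of_int_of_nat_eq)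
    moreover have "of_int (Q m) \<le> 2 * pi * of_int (Q m)"
      using mult_right_mono[of 1 "2 * pi" "of_int (Q m)"] Q[of m] pi_gt3 by simp
    ultimately show "T \<le> 2 * pi * of_int (Q m)" using m(3) by linarith
    show "\<bar>2 * pi * (of_int (Q m) * l j - of_int (P m j))\<bar> < \<epsilon>" if "j < N" for j
      using \<phi>_bound[OF that, of m] m(2) by (simp add: \<phi>_def)
    show "D (\<lambda>j. (k + 2 * pi * of_int (Q m) + \<delta>) * l j) *
        D (\<lambda>j. (k + 2 * pi * of_int (Q m) - \<delta>) * l j) < 0"
      using m(1) D_shift[of m \<delta>] D_shift[of m "- \<delta>"] by simp
  qed
qed

lemma zero_on_ray_near_mod_2pi:
  fixes D :: "(nat \<Rightarrow> real) \<Rightarrow> real" and l :: "nat \<Rightarrow> real"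
  assumes cont: "\<And>X \<theta>. (\<And>j. j < N \<Longrightarrow> (\<lambda>m. X m j) \<longlonglongrightarrow> \<theta> j) \<Longrightarrow> (\<lambda>m. D (X m)) \<longlonglongrightarrow> D \<theta>"
    and periodic: "\<And>\<theta> q. D (\<lambda>j. \<theta> j + 2 * pi * of_int (q j)) = D \<theta>"
    and sign_change: "\<forall>\<^sub>F \<delta> in at_right 0. D (\<lambda>j. (k + \<delta>) * l j) * D (\<lambda>j. (k - \<delta>) * l j) < 0"
    and \<epsilon>: "\<epsilon> > 0"
  shows "\<exists>s\<ge>T. \<exists>q::nat \<Rightarrow> int. D (\<lambda>j. s * l j) = 0 \<and> (\<forall>j<N. \<bar>s * l j - k * l j - 2 * pi * q j\<bar> < \<epsilon>)"
proof -
  have "\<forall>\<^sub>F \<delta> in at_right 0. \<delta> * \<bar>l j\<bar> < \<epsilon> / 2" for j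
    by (rule order_tendstoD(2)[of _ 0]) (use \<epsilon> in \<open>auto intro!: tendsto_eq_intros\<close>)
  then have "\<forall>\<^sub>F \<delta> in at_right 0. \<forall>j\<in>{..<N}. \<delta> * \<bar>l j\<bar> < \<epsilon> / 2"
    by (simp add: eventually_ball_finite)
  with sign_change eventually_at_right_less[of 0]
  have "\<forall>\<^sub>F \<delta> in at_right 0. 0 < \<delta> \<and> (\<forall>j<N. \<delta> * \<bar>l j\<bar> < \<epsilon> / 2) \<and>
      D (\<lambda>j. (k + \<delta>) * l j) * D (\<lambda>j. (k - \<delta>) * l j) < 0"
    by eventually_elim auto
  then obtain \<delta> :: real where \<delta>: "0 < \<delta>" "\<forall>j<N. \<delta> * \<bar>l j\<bar> < \<epsilon> / 2"
    and sign_\<delta>: "D (\<lambda>j. (k + \<delta>) * l j) * D (\<lambda>j. (k - \<delta>) * l j) < 0"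
    using eventually_happens'[OF trivial_limit_at_right_real] by blast
  obtain q :: int and p :: "nat \<Rightarrow> int" where q: "T + \<delta> - k \<le> 2 * pi * q"
    and p: "\<And>j. j < N \<Longrightarrow> \<bar>2 * pi * (q * l j - p j)\<bar> < \<epsilon> / 2"
    and sign_q: "D (\<lambda>j. (k + 2 * pi * q + \<delta>) * l j) * D (\<lambda>j. (k + 2 * pi * q - \<delta>) * l j) < 0"
    using shifted_sign_change[where N = N and D = D and l = l, OF cont periodic sign_\<delta>,
        where \<epsilon> = "\<epsilon> / 2" and T = "T + \<delta> - k"] \<epsilon>
    by auto
  define g where "g t = D (\<lambda>j. (k + 2 * pi * q + t) * l j)" for t
  have "continuous_on {- \<delta>..\<delta>} g"
  proof (intro continuous_at_imp_continuous_on ballI)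
    fix t
    show "isCont g t" unfolding continuous_at_sequentially comp_def g_def
      by (intro allI impI cont) (auto intro!: tendsto_intros)
  qed
  moreover have "g (- \<delta>) * g \<delta> < 0" using sign_q by (simp add: g_def mult.commute)
  ultimately obtain t where t: "- \<delta> \<le> t" "t \<le> \<delta>" "g t = 0"
    using IVT_mult_neg[of "- \<delta>" \<delta> g] \<delta> by auto
  show ?thesis
  proof (intro exI conjI allI impI)
    show "T \<le> k + 2 * pi * q + t" using q t(1) by linarith
    show "D (\<lambda>j. (k + 2 * pi * q + t) * l j) = 0" using t(3) by (simp add: g_def)
  next
    fix j assume j: "j < N"
    have "\<bar>t * l j\<bar> \<le> \<delta> * \<bar>l j\<bar>" using t by (simp add: abs_mult mult_right_mono)
    moreover have "(k + 2 * pi * q + t) * l j - k * l j - 2 * pi * p j = t * l j + 2 * pi * (q * l j - p j)"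
      by (simp add: algebra_simps)
    ultimately show "\<bar>(k + 2 * pi * q + t) * l j - k * l j - 2 * pi * p j\<bar> < \<epsilon>"
      using abs_triangle_ineq[of "t * l j" "2 * pi * (q * l j - p j)"] p[OF j] \<delta>(2) j by auto
  qed
qed


section \<open>Calculus and trigonometric identities\<close>

lemma increasing_of_has_real_derivative_nonneg:
  fixes F F' :: "real \<Rightarrow> real"
  assumes deriv: "\<And>x. x \<in> {a..b} \<Longrightarrow> (F has_real_derivative F' x) (at x within {a..b})"
    and nonneg: "\<And>x. x \<in> {a..b} \<Longrightarrow> 0 \<le> F' x" and "a \<le> c" "c \<le> d" "d \<le> b"
  shows "F c \<le> F d"
proof (rule DERIV_nonneg_imp_increasing_open[OF \<open>c \<le> d\<close>])
  fix x assume x: "c < x" "x < d"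
  then have "at x within {a..b} = at x" using assms by (intro at_within_Icc_at) auto
  then show "\<exists>y. (F has_real_derivative y) (at x) \<and> 0 \<le> y"
    using deriv[of x] nonneg[of x] x assms by auto
next
  have "continuous_on {a..b} F" using deriv by (intro DERIV_continuous_on[of _ _ F']) auto
  then show "continuous_on {c..d} F" by (rule continuous_on_subset) (use assms in auto)
qed

lemma has_real_derivative_eq_0_of_constant_on_Icc:
  fixes F :: "real \<Rightarrow> real"
  assumes "a < b" and x: "x \<in> {a..b}" and const: "\<And>y. y \<in> {a..b} \<Longrightarrow> F y = F a"
    and deriv: "(F has_real_derivative D) (at x within {a..b})"
  shows "D = 0"
proof -
  have "(F has_real_derivative 0) (at x within {a..b})"
    by (rule has_field_derivative_transform_within[where f = "\<lambda>_. F a" and d = 1])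
      (use x in \<open>auto intro: const[symmetric]\<close>)
  moreover have "at x within {a..b} \<noteq> bot" using x \<open>a < b\<close> by (simp add: trivial_limit_within)
  ultimately show ?thesis using has_field_derivative_unique[OF deriv] by blast
qed

lemma harmonic_oscillator_zero:
  fixes g g' g'' :: "real \<Rightarrow> real"
  assumes D: "\<forall>x\<in>{0..L}. (g has_real_derivative g' x) (at x within {0..L}) \<and>
      (g' has_real_derivative g'' x) (at x within {0..L}) \<and> g'' x = - (s\<^sup>2 * g x)"
    and "g 0 = 0" and "g' 0 = 0" and "s \<noteq> 0"
  shows "\<forall>x\<in>{0..L}. g x = 0 \<and> g' x = 0"
proof
  fix x assume x: "x \<in> {0..L}"
  define E where "E y = (g' y)\<^sup>2 + s\<^sup>2 * (g y)\<^sup>2" for y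
  have "(E has_real_derivative 0) (at y within {0..L})" if y: "y \<in> {0..L}" for y
  proof -
    have d: "(g has_real_derivative g' y) (at y within {0..L})"
        "(g' has_real_derivative g'' y) (at y within {0..L})"
      using D y by blast+
    have e: "g'' y = - (s\<^sup>2 * g y)" using D y by blast
    have "(E has_real_derivative 2 * g' y * g'' y + s\<^sup>2 * (2 * g y * g' y)) (at y within {0..L})"
      unfolding E_def by (rule derivative_eq_intros d | simp)+
    then show ?thesis by (simp add: e algebra_simps)
  qed
  then obtain c where "\<forall>y\<in>{0..L}. E y = c"
    using has_field_derivative_zero_constant[of "{0..L}" E] by auto
  then have "E x = E 0" using x by auto
  then have "(g' x)\<^sup>2 + s\<^sup>2 * (g x)\<^sup>2 = 0" using assms(2,3) by (simp add: E_def)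
  then show "g x = 0 \<and> g' x = 0" using \<open>s \<noteq> 0\<close> by (simp add: add_nonneg_eq_0_iff)
qed

lemma harmonic_oscillator_solution:
  fixes f f' f'' :: "real \<Rightarrow> real"
  assumes s: "s > 0"
    and D: "\<forall>x\<in>{0..L}. (f has_real_derivative f' x) (at x within {0..L}) \<and>
      (f' has_real_derivative f'' x) (at x within {0..L}) \<and> - f'' x = s\<^sup>2 * f x"
  shows "\<forall>x\<in>{0..L}. f x = f 0 * cos (s * x) + f' 0 / s * sin (s * x) \<and>
      f' x = s * (f' 0 / s * cos (s * x) - f 0 * sin (s * x))"
proof -
  define a b where "a = f 0" and "b = f' 0 / s"
  define g where "g x = f x - (a * cos (s * x) + b * sin (s * x))" for x
  define g' where "g' x = f' x - s * (b * cos (s * x) - a * sin (s * x))" for x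
  define g'' where "g'' x = f'' x + s\<^sup>2 * (a * cos (s * x) + b * sin (s * x))" for x
  have "\<forall>x\<in>{0..L}. g x = 0 \<and> g' x = 0"
  proof (rule harmonic_oscillator_zero)
    show "\<forall>x\<in>{0..L}. (g has_real_derivative g' x) (at x within {0..L}) \<and>
        (g' has_real_derivative g'' x) (at x within {0..L}) \<and> g'' x = - (s\<^sup>2 * g x)"
    proof (intro ballI conjI)
      fix x assume "x \<in> {0..L}"
      then have d: "(f has_real_derivative f' x) (at x within {0..L})"
          "(f' has_real_derivative f'' x) (at x within {0..L})" and e: "- f'' x = s\<^sup>2 * f x"
        using D by blast+
      show "(g has_real_derivative g' x) (at x within {0..L})"
        unfolding g_def g'_def by (rule derivative_eq_intros d | simp)+ (simp add: algebra_simps)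
      show "(g' has_real_derivative g'' x) (at x within {0..L})"
        unfolding g'_def g''_def
        by (rule derivative_eq_intros d | simp)+ (simp add: power2_eq_square algebra_simps)
      show "g'' x = - (s\<^sup>2 * g x)"
        using e by (simp add: g_def g''_def algebra_simps)
    qed
  qed (use s in \<open>simp_all add: g_def g'_def a_def b_def\<close>)
  show ?thesis
  proof
    fix x assume "x \<in> {0..L}"
    with \<open>\<forall>x\<in>{0..L}. g x = 0 \<and> g' x = 0\<close> have "g x = 0" "g' x = 0" by auto
    then show "f x = f 0 * cos (s * x) + f' 0 / s * sin (s * x) \<and>
        f' x = s * (f' 0 / s * cos (s * x) - f 0 * sin (s * x))"
      unfolding g_def g'_def a_def b_def by simp
  qed
qed

lemma rotation_wronskian:
  fixes S C a b c d :: real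
  assumes "S\<^sup>2 + C\<^sup>2 = 1"
  shows "b * c - a * d + (S * a - C * b) * (C * c + S * d) - (C * a + S * b) * (S * c - C * d) = 0"
proof -
  have "b * c - a * d + (S * a - C * b) * (C * c + S * d) - (C * a + S * b) * (S * c - C * d)
      = (b * c - a * d) * (1 - (S\<^sup>2 + C\<^sup>2))"
    by (simp add: power2_eq_square algebra_simps)
  then show ?thesis using assms by simp
qed

lemma rotation_norm:
  fixes S C a b :: real
  assumes "S\<^sup>2 + C\<^sup>2 = 1"
  shows "(S * a - C * b)\<^sup>2 + (C * a + S * b)\<^sup>2 = a\<^sup>2 + b\<^sup>2"
proof -
  have "(S * a - C * b)\<^sup>2 + (C * a + S * b)\<^sup>2 = (a\<^sup>2 + b\<^sup>2) * (S\<^sup>2 + C\<^sup>2)"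
    by (simp add: power2_eq_square algebra_simps)
  then show ?thesis using assms by simp
qed


section \<open>Vertex conditions\<close>

locale metric_graph =
  fixes N :: nat and src tgt :: "nat \<Rightarrow> 'v" and l :: "nat \<Rightarrow> real"
  assumes length_pos: "\<And>j. j < N \<Longrightarrow> 0 < l j"
begin

(* Endpoint e < N is the initial point (t = 0) of edge e, endpoint N + j the terminal point
   (t = l j) of edge j, and rep e is the least endpoint at the same vertex. The vertex conditions
   give one equation per endpoint: continuity against rep e, except at rep e itself, which
   carries the Kirchhoff sum. *)

definition vertex_at :: "nat \<Rightarrow> 'v" where
  "vertex_at e = (if e < N then src e else tgt (e - N))"

definition rep :: "nat \<Rightarrow> nat" where
  "rep e = (LEAST e'. vertex_at e' = vertex_at e)"

definition endpoints_at :: "'v \<Rightarrow> nat set" where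
  "endpoints_at u = {e. e < 2 * N \<and> vertex_at e = u}"

definition vertex_consistent :: "(nat \<Rightarrow> real) \<Rightarrow> bool" where
  "vertex_consistent P \<longleftrightarrow> (\<forall>e<2 * N. P e = P (rep e))"

definition kirchhoff_balanced :: "(nat \<Rightarrow> real) \<Rightarrow> bool" where
  "kirchhoff_balanced Q \<longleftrightarrow> (\<forall>u. (\<Sum>e\<in>endpoints_at u. Q e) = 0)"

definition vertex_residual :: "(nat \<Rightarrow> real) \<Rightarrow> (nat \<Rightarrow> real) \<Rightarrow> nat \<Rightarrow> real" where
  "vertex_residual P Q e =
     (if rep e \<noteq> e then P e - P (rep e) else (\<Sum>e'\<in>endpoints_at (vertex_at e). Q e'))"

definition dual_weight :: "(nat \<Rightarrow> real) \<Rightarrow> (nat \<Rightarrow> real) \<Rightarrow> nat \<Rightarrow> real" where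
  "dual_weight P Q e = (if rep e \<noteq> e then Q e else - P e)"

lemma rep_le: "rep e \<le> e"
  unfolding rep_def by (rule Least_le) simp

lemma rep_less: "e < 2 * N \<Longrightarrow> rep e < 2 * N"
  using rep_le[of e] by simp

lemma vertex_at_rep [simp]: "vertex_at (rep e) = vertex_at e"
  unfolding rep_def by (rule LeastI[of "\<lambda>e'. vertex_at e' = vertex_at e" e]) simp

lemma rep_eq_iff: "rep e = rep e' \<longleftrightarrow> vertex_at e = vertex_at e'"
  by (metis rep_def vertex_at_rep)

lemma rep_rep [simp]: "rep (rep e) = rep e"
  using rep_eq_iff vertex_at_rep by blast

lemma endpoints_at_less: "e' \<in> endpoints_at u \<Longrightarrow> e' < 2 * N"
  by (simp add: endpoints_at_def)

lemma sum_lessThan_double: "(\<Sum>e<2 * N. G e) = (\<Sum>j<N. G j) + (\<Sum>j<N. G (N + j))"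
proof -
  have "(\<Sum>e<N + m. G e) = (\<Sum>j<N. G j) + (\<Sum>j<m. G (N + j))" for m
    by (induction m) (simp_all add: add_Suc_right add.assoc)
  then show ?thesis by (simp add: mult_2)
qed

lemma sum_endpoints_at:
  "(\<Sum>e\<in>endpoints_at u. G e) = (\<Sum>j | j < N \<and> src j = u. G j) + (\<Sum>j | j < N \<and> tgt j = u. G (N + j))"
proof -
  have "endpoints_at u = {j. j < N \<and> src j = u} \<union> (\<lambda>j. N + j) ` {j. j < N \<and> tgt j = u}"
  proof (intro Set.set_eqI iffI)
    fix e assume "e \<in> endpoints_at u"
    then show "e \<in> {j. j < N \<and> src j = u} \<union> (\<lambda>j. N + j) ` {j. j < N \<and> tgt j = u}"
      by (cases "e < N") (auto simp: endpoints_at_def vertex_at_def image_iff intro!: exI[of _ "e - N"])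
  qed (auto simp: endpoints_at_def vertex_at_def)
  then show ?thesis by (simp only:) (subst sum.union_disjoint; auto simp: sum.reindex)
qed

lemma vertex_consistent_iff:
  "vertex_consistent P \<longleftrightarrow> (\<forall>e<2 * N. \<forall>e'<2 * N. vertex_at e = vertex_at e' \<longrightarrow> P e = P e')"
  unfolding vertex_consistent_def by (metis rep_eq_iff rep_less rep_rep)

lemma vertex_consistent_cong:
  "(\<And>e. e < 2 * N \<Longrightarrow> P e = P' e) \<Longrightarrow> vertex_consistent P \<longleftrightarrow> vertex_consistent P'"
  by (auto simp: vertex_consistent_def rep_less)

lemma kirchhoff_balanced_scale:
  assumes "\<And>e. e < 2 * N \<Longrightarrow> Q e = c * Q' e" and "c \<noteq> 0"
  shows "kirchhoff_balanced Q \<longleftrightarrow> kirchhoff_balanced Q'"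
proof -
  have "(\<Sum>e\<in>endpoints_at u. Q e) = c * (\<Sum>e\<in>endpoints_at u. Q' e)" for u
    using assms(1) endpoints_at_less by (auto simp: sum_distrib_left intro!: sum.cong)
  then show ?thesis using assms(2) by (simp add: kirchhoff_balanced_def)
qed

lemma sum_rep_mult:
  fixes G H :: "nat \<Rightarrow> real"
  shows "(\<Sum>e<2 * N. G (rep e) * H e) =
    (\<Sum>e | e < 2 * N \<and> rep e = e. G e * (\<Sum>e'\<in>endpoints_at (vertex_at e). H e'))"
proof -
  have "(\<Sum>e<2 * N. G (rep e) * H e) =
      (\<Sum>r | r < 2 * N \<and> rep r = r. \<Sum>e | e \<in> {..<2 * N} \<and> rep e = r. G (rep e) * H e)"
    by (rule sum.group[symmetric]) (auto simp: rep_less)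
  also have "\<dots> = (\<Sum>r | r < 2 * N \<and> rep r = r. G r * (\<Sum>e'\<in>endpoints_at (vertex_at r). H e'))"
  proof (rule sum.cong)
    fix r assume "r \<in> {r. r < 2 * N \<and> rep r = r}"
    then have same_vertex: "{e. e \<in> {..<2 * N} \<and> rep e = r} = endpoints_at (vertex_at r)"
      using rep_eq_iff[of _ r] by (auto simp: endpoints_at_def)
    have "(\<Sum>e | e \<in> {..<2 * N} \<and> rep e = r. G (rep e) * H e) =
        (\<Sum>e\<in>endpoints_at (vertex_at r). G r * H e)"
      unfolding same_vertex[symmetric] by (rule sum.cong) auto
    also have "\<dots> = G r * (\<Sum>e'\<in>endpoints_at (vertex_at r). H e')"
      by (simp add: sum_distrib_left)
    finally show "(\<Sum>e | e \<in> {..<2 * N} \<and> rep e = r. G (rep e) * H e) =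
        G r * (\<Sum>e'\<in>endpoints_at (vertex_at r). H e')" .
  qed simp
  finally show ?thesis .
qed

lemma vertex_residual_eq_0_iff:
  "(\<forall>e<2 * N. vertex_residual P Q e = 0) \<longleftrightarrow> vertex_consistent P \<and> kirchhoff_balanced Q"
proof
  assume R: "\<forall>e<2 * N. vertex_residual P Q e = 0"
  have "vertex_consistent P"
    unfolding vertex_consistent_def
  proof (intro allI impI)
    fix e assume "e < 2 * N"
    then show "P e = P (rep e)" using R by (cases "rep e = e") (auto simp: vertex_residual_def)
  qed
  moreover have "kirchhoff_balanced Q"
    unfolding kirchhoff_balanced_def
  proof
    fix u
    show "(\<Sum>e\<in>endpoints_at u. Q e) = 0"
    proof (cases "endpoints_at u = {}")
      case False
      then obtain e where e: "e < 2 * N" "vertex_at e = u" by (auto simp: endpoints_at_def)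
      then show ?thesis using R rep_less[OF e(1)] by (auto simp: vertex_residual_def)
    qed simp
  qed
  ultimately show "vertex_consistent P \<and> kirchhoff_balanced Q" ..
next
  assume "vertex_consistent P \<and> kirchhoff_balanced Q"
  then show "\<forall>e<2 * N. vertex_residual P Q e = 0"
    by (auto simp: vertex_residual_def vertex_consistent_def kirchhoff_balanced_def)
qed

lemma sum_consistent_mult_balanced:
  assumes "vertex_consistent P" and "kirchhoff_balanced Q"
  shows "(\<Sum>e<2 * N. P e * Q e) = 0"
proof -
  have "(\<Sum>e<2 * N. P e * Q e) = (\<Sum>e<2 * N. P (rep e) * Q e)"
    using assms(1) by (intro sum.cong) (auto simp: vertex_consistent_def)
  also have "\<dots> = 0"
    unfolding sum_rep_mult using assms(2) by (simp add: kirchhoff_balanced_def)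
  finally show ?thesis .
qed

lemma sum_dual_weight_mult_residual:
  assumes "vertex_consistent P" and "kirchhoff_balanced Q"
  shows "(\<Sum>e<2 * N. dual_weight P Q e * vertex_residual P' Q' e) = (\<Sum>e<2 * N. Q e * P' e - P e * Q' e)"
proof -
  have "(\<Sum>e<2 * N. dual_weight P Q e * vertex_residual P' Q' e) =
      (\<Sum>e<2 * N. Q e * P' e - P' (rep e) * Q e -
         (if rep e = e then P e * (\<Sum>e'\<in>endpoints_at (vertex_at e). Q' e') else 0))"
    by (intro sum.cong) (auto simp: dual_weight_def vertex_residual_def algebra_simps)
  also have "\<dots> = (\<Sum>e<2 * N. Q e * P' e) - (\<Sum>e<2 * N. P' (rep e) * Q e) - (\<Sum>e<2 * N. P (rep e) * Q' e)"
    by (simp add: sum_subtractf sum_rep_mult sum.inter_filter[symmetric])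
  also have "(\<Sum>e<2 * N. P' (rep e) * Q e) = 0"
    unfolding sum_rep_mult using assms(2) by (simp add: kirchhoff_balanced_def)
  also have "(\<Sum>e<2 * N. P (rep e) * Q' e) = (\<Sum>e<2 * N. P e * Q' e)"
    using assms(1) by (intro sum.cong) (auto simp: vertex_consistent_def)
  finally show ?thesis by (simp add: sum_subtractf)
qed

lemma vertex_residual_cong:
  assumes "e < 2 * N" and "\<And>e'. e' < 2 * N \<Longrightarrow> P e' = P' e'" and "\<And>e'. e' < 2 * N \<Longrightarrow> Q e' = Q' e'"
  shows "vertex_residual P Q e = vertex_residual P' Q' e"
  using assms rep_less[OF assms(1)] endpoints_at_less
  by (auto simp: vertex_residual_def intro!: sum.cong)

lemma vertex_residual_linear:
  "vertex_residual (\<lambda>e'. \<Sum>i\<in>I. P i e' * c i) (\<lambda>e'. \<Sum>i\<in>I. Q i e' * c i) e =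
   (\<Sum>i\<in>I. vertex_residual (P i) (Q i) e * c i)"
  by (auto simp: vertex_residual_def sum_subtractf left_diff_distrib sum_distrib_right intro: sum.swap)

lemma tendsto_vertex_residual:
  assumes "e < 2 * N"
    and "\<And>e'. e' < 2 * N \<Longrightarrow> ((\<lambda>y. P y e') \<longlongrightarrow> P0 e') F"
    and "\<And>e'. e' < 2 * N \<Longrightarrow> ((\<lambda>y. Q y e') \<longlongrightarrow> Q0 e') F"
  shows "((\<lambda>y. vertex_residual (P y) (Q y) e) \<longlongrightarrow> vertex_residual P0 Q0 e) F"
  using assms rep_less[OF assms(1)] endpoints_at_less
  by (cases "rep e = e") (auto simp: vertex_residual_def intro!: tendsto_intros)

lemma has_real_derivative_vertex_residual:
  assumes "\<And>e'. ((\<lambda>s. P s e') has_real_derivative P' e') (at k)"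
    and "\<And>e'. ((\<lambda>s. Q s e') has_real_derivative Q' e') (at k)"
  shows "((\<lambda>s. vertex_residual (P s) (Q s) e) has_real_derivative vertex_residual P' Q' e) (at k)"
  using assms by (cases "rep e = e") (auto simp: vertex_residual_def intro!: derivative_intros)


section \<open>The secular matrix\<close>

(* A coefficient vector x stands for x j cos (s t) + x (N + j) sin (s t) on edge j. For
   \<theta> j = s l j, end_val \<theta> x and end_der \<theta> x are its values and its outgoing derivatives
   divided by s at the endpoints; they depend on \<theta> only modulo 2 pi. *)

definition edge_fun :: "real \<Rightarrow> (nat \<Rightarrow> real) \<Rightarrow> nat \<Rightarrow> real \<Rightarrow> real" where
  "edge_fun s x j t = x j * cos (s * t) + x (N + j) * sin (s * t)"

definition edge_fun_deriv :: "real \<Rightarrow> (nat \<Rightarrow> real) \<Rightarrow> nat \<Rightarrow> real \<Rightarrow> real" where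
  "edge_fun_deriv s x j t = s * (x (N + j) * cos (s * t) - x j * sin (s * t))"

definition end_val :: "(nat \<Rightarrow> real) \<Rightarrow> (nat \<Rightarrow> real) \<Rightarrow> nat \<Rightarrow> real" where
  "end_val \<theta> x e = (if e < N then x e else cos (\<theta> (e - N)) * x (e - N) + sin (\<theta> (e - N)) * x e)"

definition end_der :: "(nat \<Rightarrow> real) \<Rightarrow> (nat \<Rightarrow> real) \<Rightarrow> nat \<Rightarrow> real" where
  "end_der \<theta> x e = (if e < N then x (N + e) else sin (\<theta> (e - N)) * x (e - N) - cos (\<theta> (e - N)) * x e)"

definition secular_matrix :: "(nat \<Rightarrow> real) \<Rightarrow> nat \<Rightarrow> nat \<Rightarrow> real" where
  "secular_matrix \<theta> e i =
     vertex_residual (end_val \<theta> (\<lambda>k. if k = i then 1 else 0)) (end_der \<theta> (\<lambda>k. if k = i then 1 else 0)) e"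

definition secular_kernel :: "(nat \<Rightarrow> real) \<Rightarrow> (nat \<Rightarrow> real) \<Rightarrow> bool" where
  "secular_kernel \<theta> x \<longleftrightarrow> (\<forall>e<2 * N. mulvf (2 * N) (secular_matrix \<theta>) x e = 0)"

definition length_at :: "nat \<Rightarrow> real" where
  "length_at e = (if e < N then 0 else l (e - N))"

definition secular_deriv :: "(nat \<Rightarrow> real) \<Rightarrow> (nat \<Rightarrow> real) \<Rightarrow> nat \<Rightarrow> real" where
  "secular_deriv \<theta> v =
     vertex_residual (\<lambda>e. - length_at e * end_der \<theta> v e) (\<lambda>e. length_at e * end_val \<theta> v e)"

lemma end_val_linear:
  "e < 2 * N \<Longrightarrow> end_val \<theta> x e = (\<Sum>i<2 * N. end_val \<theta> (\<lambda>k. if k = i then 1 else 0) e * x i)"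
  by (auto simp: end_val_def distrib_right sum.distrib sum_delta_mult)

lemma end_der_linear:
  "e < 2 * N \<Longrightarrow> end_der \<theta> x e = (\<Sum>i<2 * N. end_der \<theta> (\<lambda>k. if k = i then 1 else 0) e * x i)"
  by (auto simp: end_der_def left_diff_distrib sum_subtractf sum_delta_mult)

lemma mulvf_secular_matrix:
  "e < 2 * N \<Longrightarrow> mulvf (2 * N) (secular_matrix \<theta>) x e = vertex_residual (end_val \<theta> x) (end_der \<theta> x) e"
  unfolding mulvf_def secular_matrix_def vertex_residual_linear[symmetric]
  by (rule vertex_residual_cong) (simp_all add: end_val_linear[symmetric] end_der_linear[symmetric])

lemma secular_kernel_iff:
  "secular_kernel \<theta> x \<longleftrightarrow> vertex_consistent (end_val \<theta> x) \<and> kirchhoff_balanced (end_der \<theta> x)"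
  by (simp add: secular_kernel_def mulvf_secular_matrix vertex_residual_eq_0_iff[symmetric])

lemma secular_matrix_periodic:
  "secular_matrix (\<lambda>j. \<theta> j + 2 * pi * of_int (q j)) = secular_matrix \<theta>"
proof -
  have "end_val (\<lambda>j. \<theta> j + 2 * pi * of_int (q j)) = end_val \<theta>"
    and "end_der (\<lambda>j. \<theta> j + 2 * pi * of_int (q j)) = end_der \<theta>"
    by (simp_all add: fun_eq_iff end_val_def end_der_def sin_add cos_add)
  then show ?thesis unfolding secular_matrix_def by (simp only:)
qed

lemma tendsto_end_val_end_der:
  assumes "\<And>j. j < N \<Longrightarrow> ((\<lambda>y. X y j) \<longlongrightarrow> \<theta> j) F" and "e < 2 * N"
  shows "((\<lambda>y. end_val (X y) x e) \<longlongrightarrow> end_val \<theta> x e) F"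
    and "((\<lambda>y. end_der (X y) x e) \<longlongrightarrow> end_der \<theta> x e) F"
proof -
  have lim: "((\<lambda>y. cos (X y (e - N))) \<longlongrightarrow> cos (\<theta> (e - N))) F"
    "((\<lambda>y. sin (X y (e - N))) \<longlongrightarrow> sin (\<theta> (e - N))) F" if "\<not> e < N"
    using assms that
    by (auto intro!: isCont_tendsto_compose[OF isCont_cos] isCont_tendsto_compose[OF isCont_sin])
  then show "((\<lambda>y. end_val (X y) x e) \<longlongrightarrow> end_val \<theta> x e) F"
    and "((\<lambda>y. end_der (X y) x e) \<longlongrightarrow> end_der \<theta> x e) F"
    by (auto simp: end_val_def end_der_def intro!: tendsto_intros)
qed

lemma tendsto_secular_matrix:
  assumes "\<And>j. j < N \<Longrightarrow> ((\<lambda>y. X y j) \<longlongrightarrow> \<theta> j) F" and "e < 2 * N"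
  shows "((\<lambda>y. secular_matrix (X y) e i) \<longlongrightarrow> secular_matrix \<theta> e i) F"
  unfolding secular_matrix_def
  by (rule tendsto_vertex_residual[OF assms(2)]) (use assms(1) tendsto_end_val_end_der in blast)+

lemma has_real_derivative_secular_row:
  "((\<lambda>s. mulvf (2 * N) (secular_matrix (\<lambda>j. s * l j)) v e) has_real_derivative
     secular_deriv (\<lambda>j. k * l j) v e) (at k)" if "e < 2 * N"
proof -
  have "((\<lambda>s. vertex_residual (end_val (\<lambda>j. s * l j) v) (end_der (\<lambda>j. s * l j) v) e) has_real_derivative
     secular_deriv (\<lambda>j. k * l j) v e) (at k)"
    unfolding secular_deriv_def
    by (rule has_real_derivative_vertex_residual)
      (auto simp: end_val_def end_der_def length_at_def algebra_simps intro!: derivative_eq_intros)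
  then show ?thesis using that by (simp add: mulvf_secular_matrix)
qed

lemma sum_end_wronskian:
  "(\<Sum>e<2 * N. end_der \<theta> v e * end_val \<theta> y e - end_val \<theta> v e * end_der \<theta> y e) = 0"
proof -
  have "end_der \<theta> v j * end_val \<theta> y j - end_val \<theta> v j * end_der \<theta> y j
      + (end_der \<theta> v (N + j) * end_val \<theta> y (N + j) - end_val \<theta> v (N + j) * end_der \<theta> y (N + j)) = 0"
    if "j < N" for j
  proof -
    have "end_der \<theta> v j * end_val \<theta> y j - end_val \<theta> v j * end_der \<theta> y j
      + (end_der \<theta> v (N + j) * end_val \<theta> y (N + j) - end_val \<theta> v (N + j) * end_der \<theta> y (N + j))
      = v (N + j) * y j - v j * y (N + j)
        + (sin (\<theta> j) * v j - cos (\<theta> j) * v (N + j)) * (cos (\<theta> j) * y j + sin (\<theta> j) * y (N + j))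
        - (cos (\<theta> j) * v j + sin (\<theta> j) * v (N + j)) * (sin (\<theta> j) * y j - cos (\<theta> j) * y (N + j))"
      using that by (simp add: end_val_def end_der_def)
    also have "\<dots> = 0"
      by (rule rotation_wronskian) simp
    finally show ?thesis .
  qed
  then show ?thesis by (simp add: sum_lessThan_double sum.distrib[symmetric])
qed

lemma sum_end_energy:
  "(\<Sum>e<2 * N. length_at e * ((end_der \<theta> v e)\<^sup>2 + (end_val \<theta> v e)\<^sup>2)) =
   (\<Sum>j<N. l j * ((v j)\<^sup>2 + (v (N + j))\<^sup>2))"
proof -
  have "(end_der \<theta> v (N + j))\<^sup>2 + (end_val \<theta> v (N + j))\<^sup>2 = (v j)\<^sup>2 + (v (N + j))\<^sup>2" for j
    using rotation_norm[of "sin (\<theta> j)" "cos (\<theta> j)"] by (simp add: end_val_def end_der_def)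
  then show ?thesis by (simp add: sum_lessThan_double length_at_def)
qed

(* For v in the kernel, dual_weight (end_val \<theta> v) (end_der \<theta> v) is a left null vector of the
   secular matrix (Green's identity). Its pairing with secular_deriv, the derivative along the ray
   \<theta> = s l of the secular matrix applied to v, is nonzero; this makes the secular determinant
   change sign along the ray. *)

lemma sum_dual_weight_mult_secular_row:
  assumes "secular_kernel \<theta> v"
  shows "(\<Sum>e<2 * N. dual_weight (end_val \<theta> v) (end_der \<theta> v) e *
    mulvf (2 * N) (secular_matrix \<theta>) y e) = 0"
  using assms sum_dual_weight_mult_residual sum_end_wronskian
  by (simp add: secular_kernel_iff mulvf_secular_matrix)

lemma sum_dual_weight_mult_secular_deriv:
  assumes "secular_kernel \<theta> v"
  shows "(\<Sum>e<2 * N. dual_weight (end_val \<theta> v) (end_der \<theta> v) e * secular_deriv \<theta> v e) =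
    - (\<Sum>j<N. l j * ((v j)\<^sup>2 + (v (N + j))\<^sup>2))"
proof -
  have "vertex_consistent (end_val \<theta> v)" "kirchhoff_balanced (end_der \<theta> v)"
    using assms by (simp_all add: secular_kernel_iff)
  then have "(\<Sum>e<2 * N. dual_weight (end_val \<theta> v) (end_der \<theta> v) e * secular_deriv \<theta> v e) =
      (\<Sum>e<2 * N. end_der \<theta> v e * (- length_at e * end_der \<theta> v e)
         - end_val \<theta> v e * (length_at e * end_val \<theta> v e))"
    unfolding secular_deriv_def by (rule sum_dual_weight_mult_residual)
  also have "\<dots> = - (\<Sum>e<2 * N. length_at e * ((end_der \<theta> v e)\<^sup>2 + (end_val \<theta> v e)\<^sup>2))"
    by (simp add: sum_negf[symmetric] power2_eq_square algebra_simps)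
  also have "\<dots> = - (\<Sum>j<N. l j * ((v j)\<^sup>2 + (v (N + j))\<^sup>2))"
    by (simp only: sum_end_energy)
  finally show ?thesis .
qed

lemma secular_bordered_det_neq_0:
  assumes p: "p < 2 * N" and vp: "v p \<noteq> 0" and v: "secular_kernel \<theta> v"
    and spanned: "\<And>y. secular_kernel \<theta> y \<Longrightarrow> \<exists>c. \<forall>i<2 * N. y i = c * v i"
  shows "detf (2 * N) (replace_colf (secular_matrix \<theta>) p (secular_deriv \<theta> v)) \<noteq> 0"
proof (rule detf_replace_colf_neq_0[where v = v, OF p vp])
  show "\<exists>c. \<forall>i<2 * N. y i = c * v i" if "\<forall>e<2 * N. mulvf (2 * N) (secular_matrix \<theta>) y e = 0" for y
    using spanned that by (simp add: secular_kernel_def)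
next
  fix y
  obtain j where "j < N" "v j \<noteq> 0 \<or> v (N + j) \<noteq> 0"
  proof (cases "p < N")
    case True
    with vp show ?thesis using that[of p] by auto
  next
    case False
    with p vp show ?thesis using that[of "p - N"] by auto
  qed
  then have "0 < (\<Sum>j<N. l j * ((v j)\<^sup>2 + (v (N + j))\<^sup>2))"
    using length_pos[of j] length_pos[THEN less_imp_le]
    by (intro sum_pos2[of _ j]) (auto simp: sum_power2_gt_zero_iff)
  show "\<exists>e<2 * N. mulvf (2 * N) (secular_matrix \<theta>) y e \<noteq> secular_deriv \<theta> v e"
  proof (rule ccontr)
    assume "\<not> ?thesis"
    then have "(\<Sum>e<2 * N. dual_weight (end_val \<theta> v) (end_der \<theta> v) e *
          mulvf (2 * N) (secular_matrix \<theta>) y e) =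
        (\<Sum>e<2 * N. dual_weight (end_val \<theta> v) (end_der \<theta> v) e * secular_deriv \<theta> v e)"
      by (intro sum.cong) auto
    with \<open>0 < (\<Sum>j<N. l j * ((v j)\<^sup>2 + (v (N + j))\<^sup>2))\<close> show False
      by (simp add: sum_dual_weight_mult_secular_row[OF v] sum_dual_weight_mult_secular_deriv[OF v])
  qed
qed


section \<open>Eigenfunctions and the secular kernel\<close>

lemma simple_eigenvalue_spanned:
  assumes "simple_eigenvalue N src tgt l lam"
    and "kirchhoff_eigenfunction N src tgt l lam f" and "graph_fun_nonzero N l f"
    and "kirchhoff_eigenfunction N src tgt l lam g"
  shows "\<exists>c. \<forall>j<N. \<forall>t\<in>{0..l j}. g j t = c * f j t"
proof -
  obtain \<phi> where \<phi>: "\<And>g. kirchhoff_eigenfunction N src tgt l lam g \<Longrightarrow>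
      \<exists>c. \<forall>j<N. \<forall>t\<in>{0..l j}. g j t = c * \<phi> j t"
    using assms(1) by (auto simp: simple_eigenvalue_def)
  obtain a where a: "\<forall>j<N. \<forall>t\<in>{0..l j}. f j t = a * \<phi> j t" using \<phi>[OF assms(2)] by blast
  obtain b where b: "\<forall>j<N. \<forall>t\<in>{0..l j}. g j t = b * \<phi> j t" using \<phi>[OF assms(4)] by blast
  have "a \<noteq> 0" using a assms(3) by (auto simp: graph_fun_nonzero_def)
  then have "\<forall>j<N. \<forall>t\<in>{0..l j}. g j t = b / a * f j t" using a b by simp
  then show ?thesis by blast
qed

definition boundary_value :: "(nat \<Rightarrow> real \<Rightarrow> real) \<Rightarrow> nat \<Rightarrow> real" where
  "boundary_value f e = (if e < N then f e 0 else f (e - N) (l (e - N)))"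

definition boundary_flux :: "(nat \<Rightarrow> real \<Rightarrow> real) \<Rightarrow> nat \<Rightarrow> real" where
  "boundary_flux f' e = (if e < N then f' e 0 else - f' (e - N) (l (e - N)))"

lemma kirchhoff_eigenfunction_iff:
  "kirchhoff_eigenfunction N src tgt l lam f \<longleftrightarrow>
    (\<exists>f' f''. (\<forall>j<N. \<forall>x\<in>{0..l j}.
        (f j has_real_derivative f' j x) (at x within {0..l j}) \<and>
        (f' j has_real_derivative f'' j x) (at x within {0..l j}) \<and> - f'' j x = lam * f j x) \<and>
      vertex_consistent (boundary_value f) \<and> kirchhoff_balanced (boundary_flux f'))"
proof -
  have "(\<forall>j<N. \<forall>k<N. (src j = src k \<longrightarrow> f j 0 = f k 0) \<and> (src j = tgt k \<longrightarrow> f j 0 = f k (l k)) \<and>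
      (tgt j = tgt k \<longrightarrow> f j (l j) = f k (l k))) \<longleftrightarrow> vertex_consistent (boundary_value f)"
    unfolding vertex_consistent_iff
  proof (intro iffI allI impI)
    fix e e' assume C: "\<forall>j<N. \<forall>k<N. (src j = src k \<longrightarrow> f j 0 = f k 0) \<and>
      (src j = tgt k \<longrightarrow> f j 0 = f k (l k)) \<and> (tgt j = tgt k \<longrightarrow> f j (l j) = f k (l k))"
      and e: "e < 2 * N" "e' < 2 * N" "vertex_at e = vertex_at e'"
    have "e - N < N" if "\<not> e < N" using e(1) that by simp
    moreover have "e' - N < N" if "\<not> e' < N" using e(2) that by simp
    ultimately show "boundary_value f e = boundary_value f e'"
      using e(3) C[rule_format, of e e'] C[rule_format, of e "e' - N"] C[rule_format, of e' "e - N"]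
        C[rule_format, of "e - N" "e' - N"]
      by (cases "e < N"; cases "e' < N") (auto simp: vertex_at_def boundary_value_def)
  next
    fix j k assume V: "\<forall>e<2 * N. \<forall>e'<2 * N.
        vertex_at e = vertex_at e' \<longrightarrow> boundary_value f e = boundary_value f e'"
      and "j < N" "k < N"
    then show "(src j = src k \<longrightarrow> f j 0 = f k 0) \<and> (src j = tgt k \<longrightarrow> f j 0 = f k (l k)) \<and>
      (tgt j = tgt k \<longrightarrow> f j (l j) = f k (l k))"
      using V[rule_format, of j k] V[rule_format, of j "N + k"] V[rule_format, of "N + j" "N + k"]
      by (auto simp: vertex_at_def boundary_value_def)
  qed
  moreover have "(\<Sum>e\<in>endpoints_at u. boundary_flux f' e) =
      (\<Sum>j | j < N \<and> src j = u. f' j 0) + (\<Sum>j | j < N \<and> tgt j = u. - f' j (l j))" for f' u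
    unfolding sum_endpoints_at by (auto simp: boundary_flux_def intro!: arg_cong2[where f = "(+)"] sum.cong)
  ultimately show ?thesis
    unfolding kirchhoff_eigenfunction_def kirchhoff_balanced_def by simp
qed

lemma eigenvalue_nonneg:
  assumes ef: "kirchhoff_eigenfunction N src tgt l lam f" and nz: "graph_fun_nonzero N l f"
  shows "0 \<le> lam"
proof (rule ccontr)
  assume "\<not> 0 \<le> lam"
  obtain f' f'' where D: "\<forall>j<N. \<forall>x\<in>{0..l j}.
        (f j has_real_derivative f' j x) (at x within {0..l j}) \<and>
        (f' j has_real_derivative f'' j x) (at x within {0..l j}) \<and> - f'' j x = lam * f j x"
    and C: "vertex_consistent (boundary_value f)" and K: "kirchhoff_balanced (boundary_flux f')"
    using ef by (auto simp: kirchhoff_eigenfunction_iff)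
  define F where "F j x = f j x * f' j x" for j x
  define F' where "F' j x = (f' j x)\<^sup>2 - lam * (f j x)\<^sup>2" for j x
  have F'_nonneg: "0 \<le> F' j x" for j x
  proof -
    have "lam * (f j x)\<^sup>2 \<le> 0" using \<open>\<not> 0 \<le> lam\<close> by (simp add: mult_nonpos_nonneg)
    then show ?thesis unfolding F'_def using zero_le_power2[of "f' j x"] by linarith
  qed
  have F'_pos: "0 < F' j x" if "f j x \<noteq> 0" for j x
  proof -
    have "lam * (f j x)\<^sup>2 < 0" using \<open>\<not> 0 \<le> lam\<close> that by (simp add: mult_neg_pos)
    then show ?thesis unfolding F'_def using zero_le_power2[of "f' j x"] by linarith
  qed
  have dF: "(F j has_real_derivative F' j x) (at x within {0..l j})" if "j < N" "x \<in> {0..l j}" for j x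
  proof -
    have d: "(f j has_real_derivative f' j x) (at x within {0..l j})"
        "(f' j has_real_derivative f'' j x) (at x within {0..l j})"
      and "- f'' j x = lam * f j x"
      using D that by auto
    have "(F j has_real_derivative f j x * f'' j x + f' j x * f' j x) (at x within {0..l j})"
      unfolding F_def by (rule DERIV_mult'[OF d])
    moreover have "f'' j x = - (lam * f j x)" using \<open>- f'' j x = lam * f j x\<close> by simp
    ultimately show ?thesis by (simp add: F'_def power2_eq_square algebra_simps)
  qed
  have mono: "F j a \<le> F j b" if "j < N" "0 \<le> a" "a \<le> b" "b \<le> l j" for j a b
    using that dF F'_nonneg
    by (intro increasing_of_has_real_derivative_nonneg[of 0 "l j" "F j" "F' j"]) auto
  have "(\<Sum>j<N. F j (l j) - F j 0) = - (\<Sum>e<2 * N. boundary_value f e * boundary_flux f' e)"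
    by (simp add: sum_lessThan_double boundary_value_def boundary_flux_def F_def sum_subtractf sum_negf)
  also have "\<dots> = 0" by (simp add: sum_consistent_mult_balanced[OF C K])
  finally have "\<forall>j\<in>{..<N}. F j (l j) - F j 0 = 0"
    using mono length_pos[THEN less_imp_le] by (subst sum_nonneg_eq_0_iff[symmetric]) auto
  moreover obtain j x where j: "j < N" and x: "x \<in> {0..l j}" and fx: "f j x \<noteq> 0"
    using nz by (auto simp: graph_fun_nonzero_def)
  ultimately have const: "F j y = F j 0" if "y \<in> {0..l j}" for y
    using mono[OF j, of 0 y] mono[OF j, of y "l j"] that j by force
  have "F' j x = 0"
    using has_real_derivative_eq_0_of_constant_on_Icc[OF length_pos[OF j] x _ dF[OF j x]] const by blast
  then show False using F'_pos[OF fx] by simp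
qed

lemma edge_fun_has_derivatives:
  "(edge_fun s x j has_real_derivative edge_fun_deriv s x j t) (at t within S)"
  "((edge_fun_deriv s x j) has_real_derivative - (s\<^sup>2 * edge_fun s x j t))
     (at t within S)"
  unfolding edge_fun_def edge_fun_deriv_def
  by (auto intro!: derivative_eq_intros simp: power2_eq_square algebra_simps)

lemma boundary_edge_fun:
  assumes "e < 2 * N"
  shows "boundary_value (edge_fun s x) e = end_val (\<lambda>j. s * l j) x e"
    and "boundary_flux (edge_fun_deriv s x) e = s * end_der (\<lambda>j. s * l j) x e"
  using assms
  by (auto simp: boundary_value_def boundary_flux_def edge_fun_def edge_fun_deriv_def end_val_def end_der_def
      algebra_simps)

lemma kirchhoff_eigenfunction_edge_fun:
  assumes "s > 0" and "secular_kernel (\<lambda>j. s * l j) x"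
  shows "kirchhoff_eigenfunction N src tgt l (s\<^sup>2) (edge_fun s x)"
  unfolding kirchhoff_eigenfunction_iff
proof (intro exI conjI)
  show "\<forall>j<N. \<forall>t\<in>{0..l j}.
      (edge_fun s x j has_real_derivative edge_fun_deriv s x j t) (at t within {0..l j}) \<and>
      ((edge_fun_deriv s x j) has_real_derivative - (s\<^sup>2 * edge_fun s x j t))
        (at t within {0..l j}) \<and>
      - (- (s\<^sup>2 * edge_fun s x j t)) = s\<^sup>2 * edge_fun s x j t"
    by (simp add: edge_fun_has_derivatives)
  show "vertex_consistent (boundary_value (edge_fun s x))"
    using assms(2) by (simp add: secular_kernel_iff vertex_consistent_cong[OF boundary_edge_fun(1)])
  show "kirchhoff_balanced (boundary_flux (edge_fun_deriv s x))"
    using assms kirchhoff_balanced_scale[OF boundary_edge_fun(2)[of _ s x]] by (simp add: secular_kernel_iff)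
qed

lemma edge_fun_of_kirchhoff_eigenfunction:
  assumes s: "s > 0" and ef: "kirchhoff_eigenfunction N src tgt l (s\<^sup>2) g"
  obtains x where "secular_kernel (\<lambda>j. s * l j) x"
    and "\<And>j t. j < N \<Longrightarrow> t \<in> {0..l j} \<Longrightarrow> g j t = edge_fun s x j t"
proof -
  obtain g' g'' where D: "\<forall>j<N. \<forall>t\<in>{0..l j}.
        (g j has_real_derivative g' j t) (at t within {0..l j}) \<and>
        (g' j has_real_derivative g'' j t) (at t within {0..l j}) \<and> - g'' j t = s\<^sup>2 * g j t"
    and C: "vertex_consistent (boundary_value g)" and K: "kirchhoff_balanced (boundary_flux g')"
    using ef by (auto simp: kirchhoff_eigenfunction_iff)
  define x where "x i = (if i < N then g i 0 else g' (i - N) 0 / s)" for i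
  have edge: "g j t = edge_fun s x j t \<and> g' j t = edge_fun_deriv s x j t"
    if j: "j < N" and t: "t \<in> {0..l j}" for j t
  proof -
    have "\<forall>t\<in>{0..l j}. g j t = g j 0 * cos (s * t) + g' j 0 / s * sin (s * t) \<and>
        g' j t = s * (g' j 0 / s * cos (s * t) - g j 0 * sin (s * t))"
      by (rule harmonic_oscillator_solution[OF s, where f'' = "g'' j"]) (use D j in blast)
    then have "g j t = g j 0 * cos (s * t) + g' j 0 / s * sin (s * t) \<and>
        g' j t = s * (g' j 0 / s * cos (s * t) - g j 0 * sin (s * t))" using t by blast
    then show ?thesis using j by (simp add: edge_fun_def edge_fun_deriv_def x_def)
  qed
  have bv: "boundary_value g e = end_val (\<lambda>j. s * l j) x e"
    and bf: "boundary_flux g' e = s * end_der (\<lambda>j. s * l j) x e" if e: "e < 2 * N" for e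
  proof -
    have "e - N < N \<and> l (e - N) \<in> {0..l (e - N)}" if "\<not> e < N"
      using e that length_pos[of "e - N"] by (simp add: less_imp_le)
    moreover have "e < N \<Longrightarrow> 0 \<in> {0..l e}" using length_pos[of e] by simp
    ultimately have "boundary_value g e = boundary_value (edge_fun s x) e \<and>
      boundary_flux g' e = boundary_flux (edge_fun_deriv s x) e"
      using edge unfolding boundary_value_def boundary_flux_def by (cases "e < N") simp_all
    then show "boundary_value g e = end_val (\<lambda>j. s * l j) x e"
      and "boundary_flux g' e = s * end_der (\<lambda>j. s * l j) x e"
      using boundary_edge_fun[OF e] by simp_all
  qed
  have "vertex_consistent (end_val (\<lambda>j. s * l j) x)"
    using C vertex_consistent_cong[of "boundary_value g", OF bv] by simp
  moreover have "kirchhoff_balanced (end_der (\<lambda>j. s * l j) x)"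
    using K kirchhoff_balanced_scale[of "boundary_flux g'", OF bf] s by simp
  ultimately have "secular_kernel (\<lambda>j. s * l j) x" by (simp add: secular_kernel_iff)
  with edge show ?thesis using that by blast
qed

lemma edge_fun_eq_iff:
  assumes s: "s > 0" and j: "j < N"
  shows "(\<forall>t\<in>{0..l j}. edge_fun s x j t = edge_fun s y j t) \<longleftrightarrow> x j = y j \<and> x (N + j) = y (N + j)"
proof
  assume eq: "\<forall>t\<in>{0..l j}. edge_fun s x j t = edge_fun s y j t"
  have l: "0 < l j" using length_pos[OF j] .
  then have "x j = y j" using eq[rule_format, of 0] by (simp add: edge_fun_def)
  define t0 where "t0 = min (l j) (pi / (2 * s))"
  have t0: "t0 \<in> {0..l j}" "0 < s * t0" "s * t0 \<le> pi / 2"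
    using l s by (auto simp: t0_def min_def field_simps)
  then have "0 < sin (s * t0)" by (intro sin_gt_zero) (use pi_gt_zero in linarith)+
  moreover have "x (N + j) * sin (s * t0) = y (N + j) * sin (s * t0)"
    using eq[rule_format, OF t0(1)] \<open>x j = y j\<close> by (simp add: edge_fun_def)
  ultimately show "x j = y j \<and> x (N + j) = y (N + j)" using \<open>x j = y j\<close> by simp
qed (simp add: edge_fun_def)

lemma edge_fun_nonzero_iff:
  "s > 0 \<Longrightarrow> j < N \<Longrightarrow> (\<exists>t\<in>{0..l j}. edge_fun s x j t \<noteq> 0) \<longleftrightarrow> x j \<noteq> 0 \<or> x (N + j) \<noteq> 0"
  using edge_fun_eq_iff[of s j x "\<lambda>_. 0"] by (auto simp: edge_fun_def)

lemma secular_kernel_of_simple_eigenvalue: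
  assumes "lam \<noteq> 0" and simple: "simple_eigenvalue N src tgt l lam"
    and f: "kirchhoff_eigenfunction N src tgt l lam f" and full: "full_support N l f"
  obtains k v where "k > 0" and "N > 0" and "secular_kernel (\<lambda>j. k * l j) v"
    and "\<And>j. j < N \<Longrightarrow> v j \<noteq> 0 \<or> v (N + j) \<noteq> 0"
    and "\<And>y. secular_kernel (\<lambda>j. k * l j) y \<Longrightarrow> \<exists>c. \<forall>i<2 * N. y i = c * v i"
proof -
  have N: "N > 0" using simple by (auto simp: simple_eigenvalue_def graph_fun_nonzero_def)
  then have nz: "graph_fun_nonzero N l f" using full by (auto simp: full_support_def graph_fun_nonzero_def)
  define k where "k = sqrt lam"
  have k: "k > 0" and lam: "lam = k\<^sup>2" using eigenvalue_nonneg[OF f nz] \<open>lam \<noteq> 0\<close> by (auto simp: k_def)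
  obtain v where v: "secular_kernel (\<lambda>j. k * l j) v"
    and fv: "\<And>j t. j < N \<Longrightarrow> t \<in> {0..l j} \<Longrightarrow> f j t = edge_fun k v j t"
    using edge_fun_of_kirchhoff_eigenfunction[OF k] f unfolding lam by blast
  have support: "v j \<noteq> 0 \<or> v (N + j) \<noteq> 0" if "j < N" for j
  proof -
    have "\<exists>t\<in>{0..l j}. edge_fun k v j t \<noteq> 0" using full that fv by (fastforce simp: full_support_def)
    then show ?thesis using edge_fun_nonzero_iff[OF k that] by blast
  qed
  have "\<exists>c. \<forall>i<2 * N. y i = c * v i" if y: "secular_kernel (\<lambda>j. k * l j) y" for y
  proof -
    obtain c where c: "\<forall>j<N. \<forall>t\<in>{0..l j}. edge_fun k y j t = c * f j t"
      using simple_eigenvalue_spanned[OF simple f nz] kirchhoff_eigenfunction_edge_fun[OF k y]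
      unfolding lam by blast
    have "y j = c * v j \<and> y (N + j) = c * v (N + j)" if "j < N" for j
    proof -
      have "\<forall>t\<in>{0..l j}. edge_fun k y j t = edge_fun k (\<lambda>i. c * v i) j t"
        using c fv that by (simp add: edge_fun_def distrib_left mult.assoc)
      then show ?thesis using edge_fun_eq_iff[OF k that] by simp
    qed
    then have "\<forall>i<2 * N. y i = c * v i"
      by (metis add_diff_inverse_nat less_diff_conv2 mult_2 not_less)
    then show ?thesis by blast
  qed
  with k N v support show thesis using that by blast
qed

lemma simple_eigenvalue_of_secular_kernel:
  assumes s: "s > 0" and N: "N > 0" and z: "secular_kernel (\<lambda>j. s * l j) z"
    and spanned: "\<And>x. secular_kernel (\<lambda>j. s * l j) x \<Longrightarrow> \<exists>c. \<forall>i<2 * N. x i = c * z i"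
    and support: "\<And>j. j < N \<Longrightarrow> z j \<noteq> 0 \<or> z (N + j) \<noteq> 0"
  shows "simple_eigenvalue N src tgt l (s\<^sup>2) \<and>
    (\<exists>f. kirchhoff_eigenfunction N src tgt l (s\<^sup>2) f \<and> full_support N l f)"
proof -
  have ef: "kirchhoff_eigenfunction N src tgt l (s\<^sup>2) (edge_fun s z)"
    by (rule kirchhoff_eigenfunction_edge_fun[OF s z])
  have full: "full_support N l (edge_fun s z)"
    using support edge_fun_nonzero_iff[OF s] by (simp add: full_support_def)
  have "\<exists>c. \<forall>j<N. \<forall>t\<in>{0..l j}. g j t = c * edge_fun s z j t"
    if g: "kirchhoff_eigenfunction N src tgt l (s\<^sup>2) g" for g
  proof -
    obtain x where x: "secular_kernel (\<lambda>j. s * l j) x"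
      and gx: "\<And>j t. j < N \<Longrightarrow> t \<in> {0..l j} \<Longrightarrow> g j t = edge_fun s x j t"
      using edge_fun_of_kirchhoff_eigenfunction[OF s g] by blast
    obtain c where "\<forall>i<2 * N. x i = c * z i" using spanned[OF x] by blast
    then have "\<forall>j<N. \<forall>t\<in>{0..l j}. g j t = c * edge_fun s z j t"
      using gx by (simp add: edge_fun_def algebra_simps)
    then show ?thesis by blast
  qed
  moreover have "graph_fun_nonzero N l (edge_fun s z)"
    using full N by (auto simp: full_support_def graph_fun_nonzero_def)
  ultimately show ?thesis using ef full by (auto simp: simple_eigenvalue_def)
qed


section \<open>Simple eigenvalues far out\<close>

lemma secular_det_sign_change:
  assumes p: "p < 2 * N" "v p \<noteq> 0" and v: "secular_kernel (\<lambda>j. k * l j) v"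
    and spanned: "\<And>y. secular_kernel (\<lambda>j. k * l j) y \<Longrightarrow> \<exists>c. \<forall>i<2 * N. y i = c * v i"
  shows "\<forall>\<^sub>F \<delta> in at_right 0.
    detf (2 * N) (secular_matrix (\<lambda>j. (k + \<delta>) * l j)) *
      detf (2 * N) (secular_matrix (\<lambda>j. (k - \<delta>) * l j)) < 0"
proof (rule detf_sign_change[where A = "\<lambda>s. secular_matrix (\<lambda>j. s * l j)" and n = "2 * N"
      and a = k and v = v and r = "secular_deriv (\<lambda>j. k * l j) v", OF p])
  show "((\<lambda>s. secular_matrix (\<lambda>j. s * l j) e i) \<longlongrightarrow> secular_matrix (\<lambda>j. k * l j) e i) (at k)"
    if "e < 2 * N" for e i
    by (rule tendsto_secular_matrix[OF _ that]) (auto intro!: tendsto_eq_intros)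
  show "detf (2 * N) (replace_colf (secular_matrix (\<lambda>j. k * l j)) p (secular_deriv (\<lambda>j. k * l j) v)) \<noteq> 0"
    by (rule secular_bordered_det_neq_0[where v = v, OF p v spanned])
qed (use v in \<open>simp_all add: secular_kernel_def has_real_derivative_secular_row\<close>)

lemma secular_zeros_approaching:
  assumes p: "p < 2 * N" "v p \<noteq> 0" and v: "secular_kernel (\<lambda>j. k * l j) v"
    and spanned: "\<And>y. secular_kernel (\<lambda>j. k * l j) y \<Longrightarrow> \<exists>c. \<forall>i<2 * N. y i = c * v i"
  obtains S :: "nat \<Rightarrow> real" and \<psi> :: "nat \<Rightarrow> nat \<Rightarrow> real"
  where "\<And>m. real m \<le> S m" and "\<And>m. secular_matrix (\<lambda>j. S m * l j) = secular_matrix (\<psi> m)"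
    and "\<And>m. detf (2 * N) (secular_matrix (\<psi> m)) = 0" and "\<And>j. j < N \<Longrightarrow> (\<lambda>m. \<psi> m j) \<longlonglongrightarrow> k * l j"
proof -
  let ?D = "\<lambda>\<theta>. detf (2 * N) (secular_matrix \<theta>)"
  have sign_change: "\<forall>\<^sub>F \<delta> in at_right 0. ?D (\<lambda>j. (k + \<delta>) * l j) * ?D (\<lambda>j. (k - \<delta>) * l j) < 0"
    by (rule secular_det_sign_change[OF p v spanned])
  have D_cont: "(\<lambda>m. ?D (X m)) \<longlonglongrightarrow> ?D \<theta>" if "\<And>j. j < N \<Longrightarrow> (\<lambda>m. X m j) \<longlonglongrightarrow> \<theta> j" for X \<theta>
    using that by (intro tendsto_detf tendsto_secular_matrix)
  have "\<exists>s\<ge>real m. \<exists>q::nat \<Rightarrow> int. ?D (\<lambda>j. s * l j) = 0 \<and>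
      (\<forall>j<N. \<bar>s * l j - k * l j - 2 * pi * q j\<bar> < 1 / (real m + 1))" for m
    by (rule zero_on_ray_near_mod_2pi[OF D_cont _ sign_change]) (simp_all add: secular_matrix_periodic)
  then obtain S :: "nat \<Rightarrow> real" and Q :: "nat \<Rightarrow> nat \<Rightarrow> int"
    where S: "\<And>m. S m \<ge> real m" "\<And>m. ?D (\<lambda>j. S m * l j) = 0"
      and SQ: "\<And>m j. j < N \<Longrightarrow> \<bar>S m * l j - k * l j - 2 * pi * Q m j\<bar> < 1 / (real m + 1)"
    by metis
  define \<psi> where "\<psi> m j = S m * l j - 2 * pi * of_int (Q m j)" for m j
  have matrix_eq: "secular_matrix (\<lambda>j. S m * l j) = secular_matrix (\<psi> m)" for m
    using secular_matrix_periodic[of "\<psi> m" "Q m"] by (simp add: \<psi>_def)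
  have \<psi>_lim: "(\<lambda>m. \<psi> m j) \<longlonglongrightarrow> k * l j" if "j < N" for j
  proof -
    have "(\<lambda>m. \<psi> m j - k * l j) \<longlonglongrightarrow> 0"
      using SQ[OF that] by (intro Lim_null_comparison[OF _ LIMSEQ_inverse_real_of_nat])
        (simp add: \<psi>_def divide_inverse add.commute less_imp_le algebra_simps)
    then show ?thesis by (simp add: LIM_zero_iff)
  qed
  show thesis
    by (rule that[OF S(1) matrix_eq _ \<psi>_lim]) (use S(2) matrix_eq in simp_all)
qed

lemma simple_full_support_eigenvalue_beyond:
  assumes k: "k > 0" and N: "N > 0" and v: "secular_kernel (\<lambda>j. k * l j) v"
    and support: "\<And>j. j < N \<Longrightarrow> v j \<noteq> 0 \<or> v (N + j) \<noteq> 0"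
    and spanned: "\<And>y. secular_kernel (\<lambda>j. k * l j) y \<Longrightarrow> \<exists>c. \<forall>i<2 * N. y i = c * v i"
  shows "\<exists>s\<ge>T. simple_eigenvalue N src tgt l (s\<^sup>2) \<and>
    (\<exists>f. kirchhoff_eigenfunction N src tgt l (s\<^sup>2) f \<and> full_support N l f)"
proof -
  let ?\<theta>0 = "\<lambda>j. k * l j"
  obtain p where p: "p < 2 * N" "v p \<noteq> 0"
  proof (cases "v 0 = 0")
    case True
    then show ?thesis using that[of N] support[OF N] N by auto
  next
    case False
    then show ?thesis using that[of 0] N by auto
  qed
  obtain S \<psi> where S: "\<And>m. real m \<le> S m"
    and matrix_eq: "\<And>m. secular_matrix (\<lambda>j. S m * l j) = secular_matrix (\<psi> m)"
    and zero: "\<And>m. detf (2 * N) (secular_matrix (\<psi> m)) = 0"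
    and \<psi>_lim: "\<And>j. j < N \<Longrightarrow> (\<lambda>m. \<psi> m j) \<longlonglongrightarrow> k * l j"
    using secular_zeros_approaching[OF p v spanned] by blast
  have "\<forall>\<^sub>F m in sequentially. detf (2 * N) (secular_matrix (\<psi> m)) = 0 \<longrightarrow>
      (\<exists>z. (\<forall>i<2 * N. mulvf (2 * N) (secular_matrix (\<psi> m)) z i = 0) \<and>
           (\<forall>x. (\<forall>i<2 * N. mulvf (2 * N) (secular_matrix (\<psi> m)) x i = 0) \<longrightarrow>
              (\<forall>i<2 * N. x i = x p * z i)) \<and>
           (\<forall>i<2 * N. v i \<noteq> 0 \<longrightarrow> z i \<noteq> 0))"
  proof (rule kernel_perturbation[where v = v, OF p])
    show "((\<lambda>m. secular_matrix (\<psi> m) e i) \<longlonglongrightarrow> secular_matrix ?\<theta>0 e i)" if "e < 2 * N" for e i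
      using \<psi>_lim that by (intro tendsto_secular_matrix)
    show "detf (2 * N) (replace_colf (secular_matrix ?\<theta>0) p (secular_deriv ?\<theta>0 v)) \<noteq> 0"
      by (rule secular_bordered_det_neq_0[where v = v, OF p v spanned])
  qed (use v in \<open>simp add: secular_kernel_def\<close>)
  moreover have "\<forall>\<^sub>F m in sequentially. max T 1 \<le> real m"
    by (rule eventually_sequentiallyI[of "nat \<lceil>max T 1\<rceil>"]) linarith
  ultimately have "\<forall>\<^sub>F m in sequentially. max T 1 \<le> real m \<and>
      (\<exists>z. secular_kernel (\<lambda>j. S m * l j) z \<and>
           (\<forall>x. secular_kernel (\<lambda>j. S m * l j) x \<longrightarrow> (\<forall>i<2 * N. x i = x p * z i)) \<and>
           (\<forall>i<2 * N. v i \<noteq> 0 \<longrightarrow> z i \<noteq> 0))"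
    by eventually_elim (use zero in \<open>simp add: secular_kernel_def matrix_eq\<close>)
  then obtain m z where m: "max T 1 \<le> real m" and z: "secular_kernel (\<lambda>j. S m * l j) z"
    and z_spans: "\<forall>x. secular_kernel (\<lambda>j. S m * l j) x \<longrightarrow> (\<forall>i<2 * N. x i = x p * z i)"
    and z_support: "\<forall>i<2 * N. v i \<noteq> 0 \<longrightarrow> z i \<noteq> 0"
    using eventually_happens'[OF sequentially_bot] by blast
  have "simple_eigenvalue N src tgt l ((S m)\<^sup>2) \<and>
      (\<exists>f. kirchhoff_eigenfunction N src tgt l ((S m)\<^sup>2) f \<and> full_support N l f)"
  proof (rule simple_eigenvalue_of_secular_kernel[OF _ N z])
    show "0 < S m" using S[of m] m by linarith
    show "\<exists>c. \<forall>i<2 * N. x i = c * z i" if "secular_kernel (\<lambda>j. S m * l j) x" for x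
      using z_spans that by blast
    show "z j \<noteq> 0 \<or> z (N + j) \<noteq> 0" if "j < N" for j
    proof -
      have "j < 2 * N" "N + j < 2 * N" using that by simp_all
      then show ?thesis using z_support support[OF that] by blast
    qed
  qed
  moreover have "T \<le> S m" using S[of m] m by linarith
  ultimately show ?thesis by blast
qed

end

lemma infinite_if_unbounded_above:
  fixes S :: "real set"
  assumes "\<And>T. \<exists>x\<in>S. T \<le> x"
  shows "infinite S"
proof
  assume "finite S"
  then obtain M where "\<forall>x\<in>S. x \<le> M" using bdd_above_finite by (auto simp: bdd_above_def)
  moreover obtain x where "x \<in> S" "M + 1 \<le> x" using assms by blast
  ultimately show False by fastforce
qed

theorem mainTheorem17:
  fixes N :: nat and src tgt :: "nat \<Rightarrow> 'v" and l :: "nat \<Rightarrow> real"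
  assumes "\<forall>j<N. l j > 0"
    and "\<exists>lam. lam \<noteq> 0 \<and> simple_eigenvalue N src tgt l lam \<and>
           (\<exists>f. kirchhoff_eigenfunction N src tgt l lam f \<and> full_support N l f)"
  shows "infinite {lam. simple_eigenvalue N src tgt l lam \<and>
           (\<exists>f. kirchhoff_eigenfunction N src tgt l lam f \<and> full_support N l f)}"
proof -
  interpret metric_graph N src tgt l
    using assms(1) by unfold_locales blast
  obtain lam f where "lam \<noteq> 0" "simple_eigenvalue N src tgt l lam"
    "kirchhoff_eigenfunction N src tgt l lam f" "full_support N l f"
    using assms(2) by blast
  then obtain k v where "k > 0" and "N > 0" and "secular_kernel (\<lambda>j. k * l j) v"
    and "\<And>j. j < N \<Longrightarrow> v j \<noteq> 0 \<or> v (N + j) \<noteq> 0"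
    and "\<And>y. secular_kernel (\<lambda>j. k * l j) y \<Longrightarrow> \<exists>c. \<forall>i<2 * N. y i = c * v i"
    by (rule secular_kernel_of_simple_eigenvalue) blast+
  note beyond = simple_full_support_eigenvalue_beyond[OF this]
  show ?thesis
  proof (rule infinite_if_unbounded_above)
    fix T
    obtain s where s: "max T 1 \<le> s" and "simple_eigenvalue N src tgt l (s\<^sup>2) \<and>
        (\<exists>f. kirchhoff_eigenfunction N src tgt l (s\<^sup>2) f \<and> full_support N l f)"
      using beyond by blast
    moreover have "s \<le> s\<^sup>2" using s by (simp add: power2_eq_square)
    ultimately show "\<exists>x\<in>{lam. simple_eigenvalue N src tgt l lam \<and>
        (\<exists>f. kirchhoff_eigenfunction N src tgt l lam f \<and> full_support N l f)}. T \<le> x"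
      by (intro bexI[of _ "s\<^sup>2"]) auto
  qed
qed

end
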